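(* Let $\mathcal{P}$ be an augmented basic set-operad. For each $n\geq1$ and each coinvariant $\alpha\in\mathcal{P}(n)_{\mathfrak{S}_n}$ (an $\mathfrak{S}_n$-orbit in $\mathcal{P}(\{1,\dots,n\})$), choose a representative $r(\alpha)\in\mathcal{P}(\{1,\dots,n\})$ and let $P_\alpha$ be the interval $[\widehat{0},r(\alpha)]$ in the poset $\Pi_{\mathcal{P}}(\{1,\dots,n\})$. Then the collection $(P_\alpha)_\alpha$, indexed by all coinvariants of $\mathcal{P}$, is a good collection of posets.
   Context: A set-operad $\mathcal{P}$ is a species (functor from finite sets and bijections to sets) with unit and equivariant, associative, unital composition maps $\mathcal{P}(I)\times\prod_{i\in I}\mathcal{P}(J_i)\to\mathcal{P}(\coprod_{i\in I}J_i)$, $(x,(y_i))\mapsto x\circ(y_i)$. Augmented: $\mathcal{P}(\emptyset)=\emptyset$ and $\mathcal{P}$ of a singleton is a singleton. Basic: for each family $y\in\prod_{i\in I}\mathcal{P}(J_i)$, $x\mapsto x\circ y$ is injective on $\mathcal{P}(I)$. $\Pi_{\mathcal{P}}(I)$ is the set of families $x=(x_u)_{u\in\pi_x}$ where $\pi_x$ is a partition of $I$ and $x_u\in\mathcal{P}(u)$; for $a\in\Pi_{\mathcal{P}}(\pi_x)$ one sets $a\circ x=(a_v\circ(x_u)_{u\in v})_{v\in\pi_a}\in\Pi_{\mathcal{P}}(I)$. The order: $x\leq y$ iff $y=\theta\circ x$ for some $\theta\in\Pi_{\mathcal{P}}(\pi_x)$; $\widehat{0}$ is its minimum. Elements of $\mathcal{P}(I)$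 are identified with elements of $\Pi_{\mathcal{P}}(I)$ with one-block partition. A collection of posets $(P_\alpha)_{\alpha\in A}$ is good if (1) each $P_\alpha$ has a minimum $\widehat{0}$ and a maximum $\widehat{1}$, and (2) for every $\alpha$ and every $x\in P_\alpha$, the interval $[\widehat{0},x]$ is isomorphic to a finite product of posets of the collection, and $[x,\widehat{1}]$ is isomorphic to a finite product of posets of the collection. *)

theory Defs
  imports Main "HOL-Library.Disjoint_Sets"
begin

text \<open>Species with labels in finite subsets of nat.  P I is the set of structures on I;
  ren I s x relabels x in P I along a bijection s from I onto s ` I.\<close>

definition species :: "(nat set \<Rightarrow> 'b set) \<Rightarrow> (nat set \<Rightarrow> (nat \<Rightarrow> nat) \<Rightarrow> 'b \<Rightarrow> 'b) \<Rightarrow> bool" where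
  "species P ren \<longleftrightarrow>
     (\<forall>I J s x. finite I \<and> bij_betw s I J \<and> x \<in> P I \<longrightarrow> ren I s x \<in> P J) \<and>
     (\<forall>I s x. finite I \<and> (\<forall>i\<in>I. s i = i) \<and> x \<in> P I \<longrightarrow> ren I s x = x) \<and>
     (\<forall>I J s t x. finite I \<and> bij_betw s I J \<and> (\<forall>i\<in>I. s i = t i) \<and> x \<in> P I
        \<longrightarrow> ren I s x = ren I t x) \<and>
     (\<forall>I J K s t x. finite I \<and> bij_betw s I J \<and> bij_betw t J K \<and> x \<in> P I
        \<longrightarrow> ren J t (ren I s x) = ren I (t \<circ> s) x)"

text \<open>Admissible arguments of a composition x o (y_i)_{i in I}: the J i are pairwise
  disjoint finite sets (modelling the disjoint union) and y i is in P (J i).\<close>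

definition comp_args :: "(nat set \<Rightarrow> 'b set) \<Rightarrow> nat set \<Rightarrow> (nat \<Rightarrow> nat set) \<Rightarrow> (nat \<Rightarrow> 'b) \<Rightarrow> bool" where
  "comp_args P I J y \<longleftrightarrow> finite I \<and> (\<forall>i\<in>I. finite (J i)) \<and> disjoint_family_on J I
     \<and> (\<forall>i\<in>I. y i \<in> P (J i))"

definition set_operad ::
  "(nat set \<Rightarrow> 'b set) \<Rightarrow> (nat set \<Rightarrow> (nat \<Rightarrow> nat) \<Rightarrow> 'b \<Rightarrow> 'b) \<Rightarrow> (nat \<Rightarrow> 'b)
   \<Rightarrow> (nat set \<Rightarrow> 'b \<Rightarrow> (nat \<Rightarrow> nat set) \<Rightarrow> (nat \<Rightarrow> 'b) \<Rightarrow> 'b) \<Rightarrow> bool" where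
  "set_operad P ren e cmp \<longleftrightarrow>
     species P ren \<and>
     \<comment> \<open>unit: a natural element of P on each singleton\<close>
     (\<forall>i. e i \<in> P {i}) \<and>
     (\<forall>i s. ren {i} s (e i) = e (s i)) \<and>
     \<comment> \<open>composition lands in P of the union\<close>
     (\<forall>I x J y. x \<in> P I \<and> comp_args P I J y \<longrightarrow> cmp I x J y \<in> P (\<Union>(J ` I))) \<and>
     \<comment> \<open>composition only depends on the family indexed by I\<close>
     (\<forall>I x J y J' y'. x \<in> P I \<and> comp_args P I J y \<and> (\<forall>i\<in>I. J i = J' i \<and> y i = y' i)
        \<longrightarrow> cmp I x J y = cmp I x J' y') \<and>
     \<comment> \<open>equivariance in the top argument\<close>
     (\<forall>I K s x J y. finite I \<and> bij_betw s I K \<and> x \<in> P I \<and> comp_args P K J y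
        \<longrightarrow> cmp K (ren I s x) J y = cmp I x (J \<circ> s) (y \<circ> s)) \<and>
     \<comment> \<open>equivariance in the inputs\<close>
     (\<forall>I x J y t. x \<in> P I \<and> comp_args P I J y \<and> inj_on t (\<Union>(J ` I))
        \<longrightarrow> ren (\<Union>(J ` I)) t (cmp I x J y)
            = cmp I x (\<lambda>i. t ` J i) (\<lambda>i. ren (J i) t (y i))) \<and>
     \<comment> \<open>unit laws\<close>
     (\<forall>i J y. comp_args P {i} J y \<longrightarrow> cmp {i} (e i) J y = y i) \<and>
     (\<forall>I x. finite I \<and> x \<in> P I \<longrightarrow> cmp I x (\<lambda>i. {i}) e = x) \<and>
     \<comment> \<open>associativity\<close>
     (\<forall>I x J y K z. x \<in> P I \<and> comp_args P I J y \<and> comp_args P (\<Union>(J ` I)) K z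
        \<longrightarrow> cmp (\<Union>(J ` I)) (cmp I x J y) K z
            = cmp I x (\<lambda>i. \<Union>(K ` J i)) (\<lambda>i. cmp (J i) (y i) K z))"

definition augmented :: "(nat set \<Rightarrow> 'b set) \<Rightarrow> (nat \<Rightarrow> 'b) \<Rightarrow> bool" where
  "augmented P e \<longleftrightarrow> P {} = {} \<and> (\<forall>i. P {i} = {e i})"

definition basic :: "(nat set \<Rightarrow> 'b set) \<Rightarrow> (nat set \<Rightarrow> 'b \<Rightarrow> (nat \<Rightarrow> nat set) \<Rightarrow> (nat \<Rightarrow> 'b) \<Rightarrow> 'b) \<Rightarrow> bool" where
  "basic P cmp \<longleftrightarrow> (\<forall>I J y. comp_args P I J y \<longrightarrow> inj_on (\<lambda>x. cmp I x J y) (P I))"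

text \<open>Pi_P(I): families (x_u)_{u in pi_x}, represented as partial maps with domain pi_x.\<close>

definition PiP :: "(nat set \<Rightarrow> 'b set) \<Rightarrow> nat set \<Rightarrow> (nat set \<Rightarrow> 'b option) set" where
  "PiP P I = {x. partition_on I (dom x) \<and> (\<forall>u\<in>dom x. the (x u) \<in> P u)}"

text \<open>a o x, where the blocks of pi_x are labelled by a finite set L of naturals
  through a bijection b : L -> pi_x, and a is in Pi_P(L).\<close>

definition compfam ::
  "(nat set \<Rightarrow> 'b \<Rightarrow> (nat \<Rightarrow> nat set) \<Rightarrow> (nat \<Rightarrow> 'b) \<Rightarrow> 'b) \<Rightarrow> (nat \<Rightarrow> nat set)
   \<Rightarrow> (nat set \<Rightarrow> 'b option) \<Rightarrow> (nat set \<Rightarrow> 'b option) \<Rightarrow> (nat set \<Rightarrow> 'b option)" where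
  "compfam cmp b a x = (\<lambda>w. if \<exists>v\<in>dom a. w = \<Union>(b ` v)
      then (let v = (THE v. v \<in> dom a \<and> w = \<Union>(b ` v))
            in Some (cmp v (the (a v)) b (\<lambda>l. the (x (b l)))))
      else None)"

definition le_Pi ::
  "(nat set \<Rightarrow> 'b set) \<Rightarrow> (nat set \<Rightarrow> 'b \<Rightarrow> (nat \<Rightarrow> nat set) \<Rightarrow> (nat \<Rightarrow> 'b) \<Rightarrow> 'b) \<Rightarrow> nat set
   \<Rightarrow> (nat set \<Rightarrow> 'b option) \<Rightarrow> (nat set \<Rightarrow> 'b option) \<Rightarrow> bool" where
  "le_Pi P cmp I x y \<longleftrightarrow> x \<in> PiP P I \<and> y \<in> PiP P I \<and>
     (\<exists>L b a. finite L \<and> bij_betw b L (dom x) \<and> a \<in> PiP P L \<and> y = compfam cmp b a x)"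

definition pi_zero :: "(nat \<Rightarrow> 'b) \<Rightarrow> nat set \<Rightarrow> (nat set \<Rightarrow> 'b option)" where
  "pi_zero e I = (\<lambda>u. if \<exists>i\<in>I. u = {i} then Some (e (the_elem u)) else None)"

definition one_block :: "nat set \<Rightarrow> 'b \<Rightarrow> (nat set \<Rightarrow> 'b option)" where
  "one_block I x = [I \<mapsto> x]"

definition coinvariants :: "(nat set \<Rightarrow> 'b set) \<Rightarrow> (nat set \<Rightarrow> (nat \<Rightarrow> nat) \<Rightarrow> 'b \<Rightarrow> 'b)
   \<Rightarrow> (nat \<times> 'b set) set" where
  "coinvariants P ren = {(n, \<alpha>). n \<ge> 1 \<and>
     (\<exists>x \<in> P {1..n}. \<alpha> = {ren {1..n} s x | s. bij_betw s {1..n} {1..n}})}"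

text \<open>Posets given as carrier + relation; finite products indexed by lists.\<close>

definition is_poset :: "'x set \<Rightarrow> ('x \<Rightarrow> 'x \<Rightarrow> bool) \<Rightarrow> bool" where
  "is_poset C le \<longleftrightarrow> (\<forall>x\<in>C. le x x) \<and> (\<forall>x\<in>C. \<forall>y\<in>C. le x y \<and> le y x \<longrightarrow> x = y)
     \<and> (\<forall>x\<in>C. \<forall>y\<in>C. \<forall>z\<in>C. le x y \<and> le y z \<longrightarrow> le x z)"

definition poset_iso :: "'x set \<Rightarrow> ('x \<Rightarrow> 'x \<Rightarrow> bool) \<Rightarrow> 'y set \<Rightarrow> ('y \<Rightarrow> 'y \<Rightarrow> bool) \<Rightarrow> bool" where
  "poset_iso X leX Y leY \<longleftrightarrow>
     (\<exists>f. bij_betw f X Y \<and> (\<forall>a\<in>X. \<forall>b\<in>X. leX a b \<longleftrightarrow> leY (f a) (f b)))"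

definition prod_carrier :: "('i \<Rightarrow> 'x set) \<Rightarrow> 'i list \<Rightarrow> 'x list set" where
  "prod_carrier C is = {ts. length ts = length is \<and> (\<forall>k<length is. ts ! k \<in> C (is ! k))}"

definition prod_le :: "('i \<Rightarrow> 'x \<Rightarrow> 'x \<Rightarrow> bool) \<Rightarrow> 'i list \<Rightarrow> 'x list \<Rightarrow> 'x list \<Rightarrow> bool" where
  "prod_le le is ts us \<longleftrightarrow> (\<forall>k<length is. le (is ! k) (ts ! k) (us ! k))"

definition iso_finite_product ::
  "'i set \<Rightarrow> ('i \<Rightarrow> 'x set) \<Rightarrow> ('i \<Rightarrow> 'x \<Rightarrow> 'x \<Rightarrow> bool) \<Rightarrow> 'x set \<Rightarrow> ('x \<Rightarrow> 'x \<Rightarrow> bool) \<Rightarrow> bool" where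
  "iso_finite_product A C le X leX \<longleftrightarrow>
     (\<exists>is. set is \<subseteq> A \<and> poset_iso X leX (prod_carrier C is) (prod_le le is))"

definition good_collection :: "'i set \<Rightarrow> ('i \<Rightarrow> 'x set) \<Rightarrow> ('i \<Rightarrow> 'x \<Rightarrow> 'x \<Rightarrow> bool) \<Rightarrow> bool" where
  "good_collection A C le \<longleftrightarrow>
     (\<forall>\<alpha>\<in>A. is_poset (C \<alpha>) (le \<alpha>)) \<and>
     (\<forall>\<alpha>\<in>A. \<exists>bot\<in>C \<alpha>. \<exists>top\<in>C \<alpha>. (\<forall>y\<in>C \<alpha>. le \<alpha> bot y \<and> le \<alpha> y top) \<and>
        (\<forall>x\<in>C \<alpha>.
           iso_finite_product A C le {y\<in>C \<alpha>. le \<alpha> bot y \<and> le \<alpha> y x} (le \<alpha>) \<and>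
           iso_finite_product A C le {y\<in>C \<alpha>. le \<alpha> x y \<and> le \<alpha> y top} (le \<alpha>)))"

end

theory Submission
  imports Defs
begin

text \<open>A family \<open>x\<close> lies below \<open>y\<close> in \<open>\<Pi>\<^sub>\<P>(I)\<close> iff every block \<open>w\<close> of \<open>y\<close> is a union of
  blocks of \<open>x\<close> and \<open>y\<^sub>w\<close> is an operad composite of the \<open>x\<^sub>u\<close> with \<open>u \<subseteq> w\<close>. Hence
  \<open>[0, x]\<close> is the product over the blocks \<open>u\<close> of \<open>x\<close> of the intervals \<open>[0, x\<^sub>u]\<close> (restrict
  to, and glue along, the blocks of \<open>x\<close>). Dually, if the top element is \<open>p = q \<circ> x\<close> with \<open>q\<close>
  defined on the blocks of \<open>x\<close>, then \<open>a \<mapsto> a \<circ> x\<close> maps \<open>[0, q]\<close> onto \<open>[x, p]\<close>; it reflects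
  the order because the operad is basic. Finally, relabelling along a bijection is an isomorphism of
  intervals by equivariance, so every \<open>[0, q]\<close> is isomorphic to one of the \<open>P\<^sub>\<alpha>\<close>.\<close>

lemma partition_on_eq_block:
  assumes "partition_on A Q" "u \<in> Q" "v \<in> Q" "i \<in> u" "i \<in> v"
  shows "u = v"
  using assms partition_onD2[OF assms(1)] disjointD by fastforce

lemma partition_on_block_nonempty: "partition_on A Q \<Longrightarrow> u \<in> Q \<Longrightarrow> u \<noteq> {}"
  using partition_onD3 by blast

lemma partition_on_block_subset: "partition_on A Q \<Longrightarrow> u \<in> Q \<Longrightarrow> u \<subseteq> A"
  using partition_onD1 by blast

lemma partition_on_cover: "partition_on A Q \<Longrightarrow> i \<in> A \<Longrightarrow> \<exists>u\<in>Q. i \<in> u"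
  using partition_onD1 by blast

lemma partition_on_finite_block: "partition_on A Q \<Longrightarrow> finite A \<Longrightarrow> u \<in> Q \<Longrightarrow> finite u"
  using partition_on_block_subset finite_subset by metis

lemma partition_onI_overlap:
  assumes "\<Union>Q = A" "\<And>u v. u \<in> Q \<Longrightarrow> v \<in> Q \<Longrightarrow> u \<inter> v \<noteq> {} \<Longrightarrow> u = v" "{} \<notin> Q"
  shows "partition_on A Q"
  unfolding partition_on_def disjoint_def using assms by blast

locale aug_basic_operad =
  fixes P :: "nat set \<Rightarrow> 'b set"
    and ren :: "nat set \<Rightarrow> (nat \<Rightarrow> nat) \<Rightarrow> 'b \<Rightarrow> 'b"
    and e :: "nat \<Rightarrow> 'b"
    and cmp :: "nat set \<Rightarrow> 'b \<Rightarrow> (nat \<Rightarrow> nat set) \<Rightarrow> (nat \<Rightarrow> 'b) \<Rightarrow> 'b"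
  assumes operad: "set_operad P ren e cmp"
    and aug: "augmented P e"
    and basic: "basic P cmp"
begin

lemma ren_in: "finite I \<Longrightarrow> bij_betw s I J \<Longrightarrow> x \<in> P I \<Longrightarrow> ren I s x \<in> P J"
  using operad unfolding set_operad_def species_def by (elim conjE) meson

lemma ren_id: "finite I \<Longrightarrow> (\<And>i. i \<in> I \<Longrightarrow> s i = i) \<Longrightarrow> x \<in> P I \<Longrightarrow> ren I s x = x"
  using operad unfolding set_operad_def species_def by (elim conjE) meson

lemma ren_comp:
  "finite I \<Longrightarrow> bij_betw s I J \<Longrightarrow> bij_betw t J K \<Longrightarrow> x \<in> P I
   \<Longrightarrow> ren J t (ren I s x) = ren I (t \<circ> s) x"
  using operad unfolding set_operad_def species_def by (elim conjE) meson

lemma unit_in: "e i \<in> P {i}"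
  using operad unfolding set_operad_def by (elim conjE) meson

lemma P_singleton: "P {i} = {e i}"
  using aug unfolding augmented_def by blast

lemma P_nonempty_index: "x \<in> P I \<Longrightarrow> I \<noteq> {}"
  using aug unfolding augmented_def by auto

lemma cmp_in: "x \<in> P I \<Longrightarrow> comp_args P I J y \<Longrightarrow> cmp I x J y \<in> P (\<Union>(J ` I))"
  using operad unfolding set_operad_def by (elim conjE) meson

lemma cmp_cong:
  "x \<in> P I \<Longrightarrow> comp_args P I J y \<Longrightarrow> (\<And>i. i \<in> I \<Longrightarrow> J i = J' i) \<Longrightarrow> (\<And>i. i \<in> I \<Longrightarrow> y i = y' i)
   \<Longrightarrow> cmp I x J y = cmp I x J' y'"
  using operad unfolding set_operad_def by (elim conjE) meson

lemma cmp_ren_top: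
  "finite I \<Longrightarrow> bij_betw s I K \<Longrightarrow> x \<in> P I \<Longrightarrow> comp_args P K J y
   \<Longrightarrow> cmp K (ren I s x) J y = cmp I x (J \<circ> s) (y \<circ> s)"
  using operad unfolding set_operad_def by (elim conjE) meson

lemma ren_cmp:
  "x \<in> P I \<Longrightarrow> comp_args P I J y \<Longrightarrow> inj_on t (\<Union>(J ` I))
   \<Longrightarrow> ren (\<Union>(J ` I)) t (cmp I x J y) = cmp I x (\<lambda>i. t ` J i) (\<lambda>i. ren (J i) t (y i))"
  using operad unfolding set_operad_def by (elim conjE) meson

lemma cmp_unit_left: "comp_args P {i} J y \<Longrightarrow> cmp {i} (e i) J y = y i"
  using operad unfolding set_operad_def by (elim conjE) meson

lemma cmp_unit_right: "finite I \<Longrightarrow> x \<in> P I \<Longrightarrow> cmp I x (\<lambda>i. {i}) e = x"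
  using operad unfolding set_operad_def by (elim conjE) meson

lemma cmp_assoc:
  "x \<in> P I \<Longrightarrow> comp_args P I J y \<Longrightarrow> comp_args P (\<Union>(J ` I)) K z
   \<Longrightarrow> cmp (\<Union>(J ` I)) (cmp I x J y) K z = cmp I x (\<lambda>i. \<Union>(K ` J i)) (\<lambda>i. cmp (J i) (y i) K z)"
  using operad unfolding set_operad_def by (elim conjE) meson

lemma cmp_inj:
  "comp_args P I J y \<Longrightarrow> x \<in> P I \<Longrightarrow> x' \<in> P I \<Longrightarrow> cmp I x J y = cmp I x' J y \<Longrightarrow> x = x'"
  using basic unfolding basic_def inj_on_def by blast

end

definition blocks_in :: "(nat set \<Rightarrow> 'b option) \<Rightarrow> nat set \<Rightarrow> nat set set" where
  "blocks_in x w = {u \<in> dom x. u \<subseteq> w}"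

context aug_basic_operad
begin

definition composite :: "(nat set \<Rightarrow> 'b option) \<Rightarrow> nat set \<Rightarrow> 'b \<Rightarrow> bool" where
  "composite x w p \<longleftrightarrow> (\<exists>L b q. finite L \<and> bij_betw b L (blocks_in x w) \<and> q \<in> P L
      \<and> p = cmp L q b (\<lambda>l. the (x (b l))))"

lemma PiP_partition: "x \<in> PiP P I \<Longrightarrow> partition_on I (dom x)"
  unfolding PiP_def by blast

lemma PiP_value: "x \<in> PiP P I \<Longrightarrow> u \<in> dom x \<Longrightarrow> the (x u) \<in> P u"
  unfolding PiP_def by blast

lemma comp_args_blocks:
  assumes x: "x \<in> PiP P I" and fI: "finite I" and b: "bij_betw b L B" and B: "B \<subseteq> dom x"
    and fL: "finite L"
  shows "comp_args P L b (\<lambda>l. the (x (b l)))"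
  unfolding comp_args_def
proof (intro conjI ballI)
  fix i assume i: "i \<in> L"
  then have bi: "b i \<in> dom x" using bij_betw_apply[OF b] B by blast
  then show "finite (b i)" by (rule partition_on_finite_block[OF PiP_partition[OF x] fI])
  show "the (x (b i)) \<in> P (b i)" using PiP_value[OF x bi] .
next
  show "disjoint_family_on b L"
    unfolding disjoint_family_on_def
  proof (intro ballI impI)
    fix m n assume m: "m \<in> L" and n: "n \<in> L" and mn: "m \<noteq> n"
    have "b m \<noteq> b n" using b m n mn unfolding bij_betw_def inj_on_def by blast
    moreover have "b m \<in> dom x" "b n \<in> dom x" using bij_betw_apply[OF b] B m n by blast+
    ultimately show "b m \<inter> b n = {}" using partition_on_eq_block[OF PiP_partition[OF x]] by blast
  qed
qed (fact fL)

text \<open>By equivariance of the composition in its top argument.\<close>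

lemma composite_any_labelling:
  assumes x: "x \<in> PiP P I" and fI: "finite I" and p: "composite x w p"
    and fL': "finite L'" and b': "bij_betw b' L' (blocks_in x w)"
  shows "\<exists>q'\<in>P L'. p = cmp L' q' b' (\<lambda>l. the (x (b' l)))"
proof -
  obtain L b q where fL: "finite L" and b: "bij_betw b L (blocks_in x w)" and q: "q \<in> P L"
    and p: "p = cmp L q b (\<lambda>l. the (x (b l)))"
    using p unfolding composite_def by blast
  have sub: "blocks_in x w \<subseteq> dom x" unfolding blocks_in_def by blast
  define s where "s = inv_into L' b' \<circ> b"
  have s: "bij_betw s L L'" unfolding s_def
    using bij_betw_trans[OF b bij_betw_inv_into[OF b']] .
  have b's: "b' (s l) = b l" if "l \<in> L" for l
    using bij_betw_inv_into_right[OF b' bij_betw_apply[OF b that]] unfolding s_def by simp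
  have "cmp L' (ren L s q) b' (\<lambda>l. the (x (b' l))) = cmp L q (b' \<circ> s) ((\<lambda>l. the (x (b' l))) \<circ> s)"
    using cmp_ren_top[OF fL s q comp_args_blocks[OF x fI b' sub fL']] .
  also have "\<dots> = p" unfolding p
    by (rule sym, rule cmp_cong[OF q comp_args_blocks[OF x fI b sub fL]]) (simp_all add: b's)
  finally show ?thesis using ren_in[OF fL s q] by metis
qed

lemma label_mem_if_block_subset:
  assumes x: "x \<in> PiP P I" and b: "bij_betw b L (dom x)" and l: "l \<in> L" and v: "v \<subseteq> L"
    and sub: "b l \<subseteq> \<Union>(b ` v)"
  shows "l \<in> v"
proof -
  have bl: "b l \<in> dom x" using bij_betw_apply[OF b l] .
  obtain i where i: "i \<in> b l" using partition_on_block_nonempty[OF PiP_partition[OF x] bl] by blast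
  then obtain l' where l': "l' \<in> v" "i \<in> b l'" using sub by blast
  have "b l' \<in> dom x" using bij_betw_apply[OF b] l' v by blast
  then have "b l = b l'" using partition_on_eq_block[OF PiP_partition[OF x] bl _ i l'(2)] by blast
  then show ?thesis using b l l' v unfolding bij_betw_def inj_on_def by blast
qed

lemma label_union_subset_iff:
  assumes x: "x \<in> PiP P I" and b: "bij_betw b L (dom x)" and v: "v \<subseteq> L" and v': "v' \<subseteq> L"
  shows "\<Union>(b ` v) \<subseteq> \<Union>(b ` v') \<longleftrightarrow> v \<subseteq> v'"
proof
  assume "\<Union>(b ` v) \<subseteq> \<Union>(b ` v')"
  then show "v \<subseteq> v'" using label_mem_if_block_subset[OF x b _ v'] v by blast
qed auto

lemma label_union_inj:
  assumes x: "x \<in> PiP P I" and b: "bij_betw b L (dom x)" and v: "v \<subseteq> L" and v': "v' \<subseteq> L"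
    and eq: "\<Union>(b ` v) = \<Union>(b ` v')"
  shows "v = v'"
proof (rule subset_antisym)
  show "v \<subseteq> v'" using label_union_subset_iff[OF x b v v'] eq by simp
  show "v' \<subseteq> v" using label_union_subset_iff[OF x b v' v] eq by simp
qed

lemma blocks_in_label_union:
  assumes x: "x \<in> PiP P I" and b: "bij_betw b L (dom x)" and v: "v \<subseteq> L"
  shows "blocks_in x (\<Union>(b ` v)) = b ` v"
proof
  show "blocks_in x (\<Union>(b ` v)) \<subseteq> b ` v"
  proof
    fix u assume "u \<in> blocks_in x (\<Union>(b ` v))"
    then have u: "u \<in> dom x" "u \<subseteq> \<Union>(b ` v)" unfolding blocks_in_def by auto
    then obtain l where "l \<in> L" "u = b l" using b unfolding bij_betw_def by blast
    then show "u \<in> b ` v" using label_mem_if_block_subset[OF x b _ v] u(2) by blast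
  qed
  show "b ` v \<subseteq> blocks_in x (\<Union>(b ` v))"
    unfolding blocks_in_def using bij_betw_apply[OF b] v by blast
qed

lemma label_unions_overlap_eq:
  assumes x: "x \<in> PiP P I" and b: "bij_betw b L (dom x)" and a: "a \<in> PiP P L"
    and v: "v \<in> dom a" and v': "v' \<in> dom a" and overlap: "\<Union>(b ` v) \<inter> \<Union>(b ` v') \<noteq> {}"
  shows "v = v'"
proof -
  have vL: "v \<subseteq> L" "v' \<subseteq> L" using partition_on_block_subset[OF PiP_partition[OF a]] v v' by blast+
  obtain i l l' where l: "l \<in> v" "i \<in> b l" and l': "l' \<in> v'" "i \<in> b l'" using overlap by blast
  have "b l \<in> dom x" "b l' \<in> dom x" using bij_betw_apply[OF b] l(1) l'(1) vL by blast+
  then have "b l = b l'" using partition_on_eq_block[OF PiP_partition[OF x]] l(2) l'(2) by blast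
  then have "l = l'" using b l(1) l'(1) vL unfolding bij_betw_def inj_on_def by blast
  then show ?thesis using partition_on_eq_block[OF PiP_partition[OF a] v v'] l(1) l'(1) by blast
qed

lemma label_union_nonempty:
  assumes x: "x \<in> PiP P I" and b: "bij_betw b L (dom x)" and a: "a \<in> PiP P L" and v: "v \<in> dom a"
  shows "\<Union>(b ` v) \<noteq> {}"
proof -
  obtain l where l: "l \<in> v" using partition_on_block_nonempty[OF PiP_partition[OF a] v] by blast
  have "l \<in> L" using partition_on_block_subset[OF PiP_partition[OF a] v] l by blast
  then have "b l \<noteq> {}"
    using partition_on_block_nonempty[OF PiP_partition[OF x] bij_betw_apply[OF b]] by blast
  then show ?thesis using l by blast
qed

lemma compfam_at:
  assumes x: "x \<in> PiP P I" and b: "bij_betw b L (dom x)" and a: "a \<in> PiP P L" and v: "v \<in> dom a"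
  shows "compfam cmp b a x (\<Union>(b ` v)) = Some (cmp v (the (a v)) b (\<lambda>l. the (x (b l))))"
proof -
  have "(THE v'. v' \<in> dom a \<and> \<Union>(b ` v) = \<Union>(b ` v')) = v"
  proof (rule the_equality)
    fix v' assume v': "v' \<in> dom a \<and> \<Union>(b ` v) = \<Union>(b ` v')"
    then have "\<Union>(b ` v) \<inter> \<Union>(b ` v') \<noteq> {}" using label_union_nonempty[OF x b a v] by simp
    then show "v' = v" using label_unions_overlap_eq[OF x b a v] v' by blast
  qed (use v in simp)
  then show ?thesis unfolding compfam_def using v by (auto simp: Let_def)
qed

lemma compfam_dom:
  assumes x: "x \<in> PiP P I" and b: "bij_betw b L (dom x)" and a: "a \<in> PiP P L"
  shows "dom (compfam cmp b a x) = (\<lambda>v. \<Union>(b ` v)) ` dom a"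
proof
  show "dom (compfam cmp b a x) \<subseteq> (\<lambda>v. \<Union>(b ` v)) ` dom a"
  proof
    fix w assume "w \<in> dom (compfam cmp b a x)"
    then have "\<exists>v\<in>dom a. w = \<Union>(b ` v)" unfolding compfam_def by (auto split: if_splits)
    then show "w \<in> (\<lambda>v. \<Union>(b ` v)) ` dom a" by blast
  qed
  show "(\<lambda>v. \<Union>(b ` v)) ` dom a \<subseteq> dom (compfam cmp b a x)"
    using compfam_at[OF x b a] by blast
qed

lemma label_union_all:
  assumes x: "x \<in> PiP P I" and b: "bij_betw b L (dom x)"
  shows "\<Union>(b ` L) = I"
  using partition_onD1[OF PiP_partition[OF x]] b unfolding bij_betw_def by simp

lemma finite_labels:
  assumes x: "x \<in> PiP P I" and fI: "finite I" and b: "bij_betw b L (dom x)"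
  shows "finite L"
  using bij_betw_finite[OF b] finite_elements[OF fI PiP_partition[OF x]] by blast

lemma comp_args_label_subset:
  assumes x: "x \<in> PiP P I" and fI: "finite I" and b: "bij_betw b L (dom x)" and v: "v \<subseteq> L"
  shows "comp_args P v b (\<lambda>l. the (x (b l)))"
  using comp_args_blocks[OF x fI bij_betw_subset[OF b v refl] _ finite_subset[OF v finite_labels[OF x fI b]]]
    bij_betw_apply[OF b] v by blast

lemma compfam_PiP:
  assumes x: "x \<in> PiP P I" and fI: "finite I" and b: "bij_betw b L (dom x)" and a: "a \<in> PiP P L"
  shows "compfam cmp b a x \<in> PiP P I"
proof -
  have "partition_on I ((\<lambda>v. \<Union>(b ` v)) ` dom a)"
  proof (rule partition_onI_overlap)
    have "\<Union>((\<lambda>v. \<Union>(b ` v)) ` dom a) = \<Union>(b ` \<Union>(dom a))" by blast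
    also have "\<dots> = I" using partition_onD1[OF PiP_partition[OF a]] label_union_all[OF x b] by simp
    finally show "\<Union>((\<lambda>v. \<Union>(b ` v)) ` dom a) = I" .
  next
    fix u w assume "u \<in> (\<lambda>v. \<Union>(b ` v)) ` dom a" "w \<in> (\<lambda>v. \<Union>(b ` v)) ` dom a" "u \<inter> w \<noteq> {}"
    then show "u = w" using label_unions_overlap_eq[OF x b a] by blast
  next
    show "{} \<notin> (\<lambda>v. \<Union>(b ` v)) ` dom a" using label_union_nonempty[OF x b a] by blast
  qed
  moreover have "the (compfam cmp b a x w) \<in> P w" if w: "w \<in> (\<lambda>v. \<Union>(b ` v)) ` dom a" for w
  proof -
    obtain v where v: "v \<in> dom a" and w: "w = \<Union>(b ` v)" using w by blast
    have "v \<subseteq> L" using partition_on_block_subset[OF PiP_partition[OF a] v] .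
    then show ?thesis
      using cmp_in[OF PiP_value[OF a v] comp_args_label_subset[OF x fI b]] compfam_at[OF x b a v] w
      by simp
  qed
  ultimately show ?thesis unfolding PiP_def using compfam_dom[OF x b a] by simp
qed

end

lemma map_eqI:
  assumes "dom f = dom g" and "\<And>u. u \<in> dom g \<Longrightarrow> the (f u) = the (g u)"
  shows "f = g"
proof
  fix u show "f u = g u"
  proof (cases "u \<in> dom g")
    case True
    then show ?thesis using assms by (metis domIff option.collapse)
  next
    case False
    then show ?thesis using assms(1) by (metis domIff)
  qed
qed

definition labels_in :: "(nat \<Rightarrow> nat set) \<Rightarrow> nat set \<Rightarrow> nat set \<Rightarrow> nat set" where
  "labels_in b L w = {l \<in> L. b l \<subseteq> w}"

lemma bij_betw_labels_in:
  assumes b: "bij_betw b L (blocks_in x w0)" and w: "w \<subseteq> w0"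
  shows "bij_betw b (labels_in b L w) (blocks_in x w)"
proof (rule bij_betw_subset[OF b])
  show "b ` labels_in b L w = blocks_in x w"
  proof
    show "b ` labels_in b L w \<subseteq> blocks_in x w"
      using bij_betw_apply[OF b] unfolding labels_in_def blocks_in_def by blast
    show "blocks_in x w \<subseteq> b ` labels_in b L w"
    proof
      fix u assume u: "u \<in> blocks_in x w"
      then have "u \<in> blocks_in x w0" using w unfolding blocks_in_def by auto
      then obtain l where "l \<in> L" "u = b l" using b unfolding bij_betw_def by blast
      then show "u \<in> b ` labels_in b L w" using u unfolding labels_in_def blocks_in_def by blast
    qed
  qed
qed (auto simp: labels_in_def)

context aug_basic_operad
begin

lemma blocks_in_all: "x \<in> PiP P I \<Longrightarrow> blocks_in x I = dom x"
  using partition_on_block_subset[OF PiP_partition] unfolding blocks_in_def by blast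

lemma partition_on_blocks_in:
  assumes y: "y \<in> PiP P I" and U: "\<Union>(blocks_in y w) = w"
  shows "partition_on w (blocks_in y w)"
proof (rule partition_onI_overlap)
  show "\<And>u v. u \<in> blocks_in y w \<Longrightarrow> v \<in> blocks_in y w \<Longrightarrow> u \<inter> v \<noteq> {} \<Longrightarrow> u = v"
    using partition_on_eq_block[OF PiP_partition[OF y]] unfolding blocks_in_def by blast
  show "{} \<notin> blocks_in y w"
    using partition_on_block_nonempty[OF PiP_partition[OF y]] unfolding blocks_in_def by blast
qed (fact U)

lemma partition_on_labels_in:
  assumes x: "x \<in> PiP P I" and b: "bij_betw b L (blocks_in x w0)"
    and W: "partition_on w0 W" and unions: "\<And>w. w \<in> W \<Longrightarrow> \<Union>(blocks_in x w) = w"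
  shows "partition_on L (labels_in b L ` W)" and "inj_on (labels_in b L) W"
proof -
  have bl: "b l \<in> dom x" "b l \<noteq> {}" if "l \<in> L" for l
    using bij_betw_apply[OF b that] partition_on_block_nonempty[OF PiP_partition[OF x]]
    unfolding blocks_in_def by auto
  have label_union: "\<Union>(b ` labels_in b L w) = w" if "w \<in> W" for w
    using bij_betw_imp_surj_on[OF bij_betw_labels_in[OF b partition_on_block_subset[OF W that]]]
      unions[OF that] by simp
  have overlap: "w = w'"
    if w: "w \<in> W" "w' \<in> W" and ov: "labels_in b L w \<inter> labels_in b L w' \<noteq> {}" for w w'
  proof -
    obtain l where l: "l \<in> L" "b l \<subseteq> w" "b l \<subseteq> w'" using ov unfolding labels_in_def by blast
    then obtain i where "i \<in> w" "i \<in> w'" using bl(2) by blast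
    then show ?thesis using partition_on_eq_block[OF W w] by blast
  qed
  have nonempty: "labels_in b L w \<noteq> {}" if "w \<in> W" for w
    using label_union[OF that] partition_on_block_nonempty[OF W that] by auto
  show "partition_on L (labels_in b L ` W)"
  proof (rule partition_onI_overlap)
    show "\<Union>(labels_in b L ` W) = L"
    proof
      show "L \<subseteq> \<Union>(labels_in b L ` W)"
      proof
        fix l assume l: "l \<in> L"
        then obtain i where i: "i \<in> b l" using bl by blast
        have "b l \<subseteq> w0" using bij_betw_apply[OF b l] unfolding blocks_in_def by blast
        then obtain w where w: "w \<in> W" "i \<in> w" using partition_on_cover[OF W] i by blast
        then obtain u where u: "u \<in> blocks_in x w" "i \<in> u" using unions[OF w(1)] by blast
        then have "u = b l" using partition_on_eq_block[OF PiP_partition[OF x] _ bl(1)[OF l]] i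
          unfolding blocks_in_def by blast
        then show "l \<in> \<Union>(labels_in b L ` W)"
          using u(1) w(1) l unfolding blocks_in_def labels_in_def by blast
      qed
    qed (auto simp: labels_in_def)
  next
    fix u v assume "u \<in> labels_in b L ` W" "v \<in> labels_in b L ` W" "u \<inter> v \<noteq> {}"
    then show "u = v" using overlap by blast
  next
    show "{} \<notin> labels_in b L ` W" using nonempty by (metis imageE)
  qed
  show "inj_on (labels_in b L) W"
  proof (rule inj_onI)
    fix w w' assume "w \<in> W" "w' \<in> W" "labels_in b L w = labels_in b L w'"
    then show "w = w'" using overlap nonempty by (metis inf.idem)
  qed
qed

lemma composite_choice:
  assumes x: "x \<in> PiP P I" and fI: "finite I" and b: "bij_betw b L (blocks_in x w0)"
    and fL: "finite L" and W: "\<And>w. w \<in> W \<Longrightarrow> w \<subseteq> w0 \<and> composite x w (p w)"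
  obtains q where "\<And>w. w \<in> W \<Longrightarrow> q w \<in> P (labels_in b L w)
      \<and> p w = cmp (labels_in b L w) (q w) b (\<lambda>l. the (x (b l)))"
proof -
  have "\<forall>w\<in>W. \<exists>q. q \<in> P (labels_in b L w) \<and> p w = cmp (labels_in b L w) q b (\<lambda>l. the (x (b l)))"
  proof
    fix w assume w: "w \<in> W"
    have "labels_in b L w \<subseteq> L" unfolding labels_in_def by blast
    then show "\<exists>q. q \<in> P (labels_in b L w) \<and> p w = cmp (labels_in b L w) q b (\<lambda>l. the (x (b l)))"
      using composite_any_labelling[OF x fI conjunct2[OF W[OF w]] finite_subset[OF _ fL]
          bij_betw_labels_in[OF b conjunct1[OF W[OF w]]]] by blast
  qed
  from bchoice[OF this] obtain q where "\<forall>w\<in>W. q w \<in> P (labels_in b L w)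
      \<and> p w = cmp (labels_in b L w) (q w) b (\<lambda>l. the (x (b l)))" ..
  then show thesis using that by blast
qed

lemma le_PiD:
  assumes le: "le_Pi P cmp I x y" and fI: "finite I"
  shows "x \<in> PiP P I" "y \<in> PiP P I"
    and "\<And>w. w \<in> dom y \<Longrightarrow> \<Union>(blocks_in x w) = w \<and> composite x w (the (y w))"
proof -
  show x: "x \<in> PiP P I" and "y \<in> PiP P I" using le unfolding le_Pi_def by blast+
  obtain L b a where fL: "finite L" and b: "bij_betw b L (dom x)" and a: "a \<in> PiP P L"
    and y: "y = compfam cmp b a x" using le unfolding le_Pi_def by blast
  fix w assume "w \<in> dom y"
  then obtain v where v: "v \<in> dom a" and wv: "w = \<Union>(b ` v)" using compfam_dom[OF x b a] y by blast
  have vL: "v \<subseteq> L" using partition_on_block_subset[OF PiP_partition[OF a] v] .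
  have bi: "blocks_in x w = b ` v" using blocks_in_label_union[OF x b vL] wv by simp
  have "composite x w (the (y w))" unfolding composite_def
  proof (intro exI conjI)
    show "bij_betw b v (blocks_in x w)" using bij_betw_subset[OF b vL] bi by simp
    show "the (y w) = cmp v (the (a v)) b (\<lambda>l. the (x (b l)))"
      using compfam_at[OF x b a v] y wv by simp
  qed (use finite_subset[OF vL fL] PiP_value[OF a v] in auto)
  then show "\<Union>(blocks_in x w) = w \<and> composite x w (the (y w))" using bi wv by simp
qed

lemma refinement_eq_compfam:
  assumes x: "x \<in> PiP P I" and y: "y \<in> PiP P I" and fI: "finite I"
    and H: "\<And>w. w \<in> dom y \<Longrightarrow> \<Union>(blocks_in x w) = w \<and> composite x w (the (y w))"
    and b: "bij_betw b L (dom x)"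
  shows "\<exists>a\<in>PiP P L. y = compfam cmp b a x"
proof -
  define V where "V = labels_in b L"
  have bI: "bij_betw b L (blocks_in x I)" using b blocks_in_all[OF x] by simp
  have unions: "\<Union>(blocks_in x w) = w" if "w \<in> dom y" for w using H[OF that] by blast
  have part: "partition_on L (V ` dom y)" and inj: "inj_on V (dom y)"
    using partition_on_labels_in[OF x bI PiP_partition[OF y] unions] unfolding V_def by blast+
  have UV: "\<Union>(b ` V w) = w" if "w \<in> dom y" for w
    using bij_betw_imp_surj_on[OF bij_betw_labels_in[OF bI]] unions[OF that]
      partition_on_block_subset[OF PiP_partition[OF y] that] unfolding V_def by simp
  obtain Q where Q: "\<And>w. w \<in> dom y \<Longrightarrow> Q w \<in> P (V w)
      \<and> the (y w) = cmp (V w) (Q w) b (\<lambda>l. the (x (b l)))"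
  proof -
    have "w \<subseteq> I \<and> composite x w (the (y w))" if "w \<in> dom y" for w
      using H[OF that] partition_on_block_subset[OF PiP_partition[OF y] that] by blast
    then show thesis
      using composite_choice[OF x fI bI finite_labels[OF x fI b], of "dom y" "\<lambda>w. the (y w)"] that
      unfolding V_def by blast
  qed
  define a where "a v = (if v \<in> V ` dom y then Some (Q (the_inv_into (dom y) V v)) else None)" for v
  have aV: "a (V w) = Some (Q w)" if "w \<in> dom y" for w
    unfolding a_def using that the_inv_into_f_f[OF inj] by simp
  have doma: "dom a = V ` dom y"
  proof
    show "dom a \<subseteq> V ` dom y" unfolding a_def by (auto split: if_splits)
    show "V ` dom y \<subseteq> dom a" using aV by blast
  qed
  have "the (a v) \<in> P v" if v: "v \<in> dom a" for v
  proof -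
    obtain w where "w \<in> dom y" "v = V w" using v doma by blast
    then show ?thesis using aV Q by simp
  qed
  then have aP: "a \<in> PiP P L"
    unfolding PiP_def using part doma by simp
  have "compfam cmp b a x = y"
  proof (rule map_eqI)
    show "dom (compfam cmp b a x) = dom y"
      using compfam_dom[OF x b aP] doma UV by (simp add: image_image)
    fix w assume w: "w \<in> dom y"
    have "V w \<in> dom a" using doma w by blast
    then have "compfam cmp b a x w = Some (cmp (V w) (the (a (V w))) b (\<lambda>l. the (x (b l))))"
      using compfam_at[OF x b aP] UV[OF w] by metis
    then show "the (compfam cmp b a x w) = the (y w)" using aV[OF w] Q[OF w] by simp
  qed
  then show ?thesis using aP by blast
qed

lemma le_Pi_iff:
  assumes fI: "finite I"
  shows "le_Pi P cmp I x y \<longleftrightarrow> x \<in> PiP P I \<and> y \<in> PiP P I \<and>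
     (\<forall>w\<in>dom y. \<Union>(blocks_in x w) = w \<and> composite x w (the (y w)))"
proof
  assume "x \<in> PiP P I \<and> y \<in> PiP P I \<and> (\<forall>w\<in>dom y. \<Union>(blocks_in x w) = w \<and> composite x w (the (y w)))"
  then have x: "x \<in> PiP P I" and y: "y \<in> PiP P I"
    and H: "\<And>w. w \<in> dom y \<Longrightarrow> \<Union>(blocks_in x w) = w \<and> composite x w (the (y w))" by auto
  obtain b where b: "bij_betw b {0..<card (dom x)} (dom x)"
    using ex_bij_betw_nat_finite[OF finite_elements[OF fI PiP_partition[OF x]]] by blast
  then obtain a where "a \<in> PiP P {0..<card (dom x)}" "y = compfam cmp b a x"
    using refinement_eq_compfam[OF x y fI H] by blast
  then show "le_Pi P cmp I x y" unfolding le_Pi_def using x y b by blast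
next
  assume "le_Pi P cmp I x y"
  then show "x \<in> PiP P I \<and> y \<in> PiP P I \<and> (\<forall>w\<in>dom y. \<Union>(blocks_in x w) = w \<and> composite x w (the (y w)))"
    using le_PiD[OF _ fI] by blast
qed

end

section \<open>The partial order on \<open>\<Pi>\<^sub>\<P>(I)\<close>\<close>

context aug_basic_operad
begin

lemma blocks_in_own_block:
  assumes x: "x \<in> PiP P I" and w: "w \<in> dom x"
  shows "blocks_in x w = {w}"
proof -
  have "u = w" if "u \<in> dom x" "u \<subseteq> w" for u
    using partition_on_block_nonempty[OF PiP_partition[OF x] that(1)] that
      partition_on_eq_block[OF PiP_partition[OF x] that(1) w] by blast
  then show ?thesis using w unfolding blocks_in_def by blast
qed

lemma composite_own_block_iff:
  assumes x: "x \<in> PiP P I" and fI: "finite I" and w: "w \<in> dom x"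
  shows "composite x w p \<longleftrightarrow> p = the (x w)"
proof
  assume "composite x w p"
  then obtain L b q where fL: "finite L" and b: "bij_betw b L {w}" and q: "q \<in> P L"
    and p: "p = cmp L q b (\<lambda>l. the (x (b l)))"
    unfolding composite_def blocks_in_own_block[OF x w] by blast
  obtain l where l: "l \<in> L" using bij_betw_imp_surj_on[OF b] by blast
  have L: "L = {l}"
    using l bij_betw_apply[OF b] inj_onD[OF bij_betw_imp_inj_on[OF b]] by blast
  have bl: "b l = w" using bij_betw_apply[OF b l] by simp
  have "comp_args P {l} b (\<lambda>l. the (x (b l)))"
    using comp_args_blocks[OF x fI b _ fL] w L by simp
  then show "p = the (x w)" using p q cmp_unit_left bl unfolding L P_singleton by simp
next
  assume p: "p = the (x w)"
  have "comp_args P {0} (\<lambda>_. w) (\<lambda>_. the (x w))"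
    using comp_args_blocks[OF x fI, of "\<lambda>_. w" "{0::nat}" "{w}"] w by (simp add: bij_betw_def)
  then have "p = cmp {0} (e 0) (\<lambda>_. w) (\<lambda>_. the (x w))" using p cmp_unit_left by simp
  then show "composite x w p" unfolding composite_def blocks_in_own_block[OF x w]
    using unit_in by (intro exI[of _ "{0}"] exI[of _ "\<lambda>_. w"]) (auto simp: bij_betw_def)
qed

lemma le_Pi_refl:
  assumes x: "x \<in> PiP P I" and fI: "finite I"
  shows "le_Pi P cmp I x x"
  unfolding le_Pi_iff[OF fI]
  using x composite_own_block_iff[OF x fI] blocks_in_own_block[OF x] by simp

lemma le_Pi_block_refines:
  assumes le: "le_Pi P cmp I x y" and fI: "finite I" and u: "u \<in> dom x"
  shows "\<exists>v\<in>dom y. u \<subseteq> v"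
proof -
  have x: "x \<in> PiP P I" and y: "y \<in> PiP P I" using le_PiD[OF le fI] by auto
  obtain i where i: "i \<in> u" using partition_on_block_nonempty[OF PiP_partition[OF x] u] by blast
  have "i \<in> I" using partition_on_block_subset[OF PiP_partition[OF x] u] i by blast
  then obtain v where v: "v \<in> dom y" "i \<in> v" using partition_on_cover[OF PiP_partition[OF y]] by blast
  then have "i \<in> \<Union>(blocks_in x v)" using le_PiD(3)[OF le fI v(1)] by simp
  then obtain u' where u': "u' \<in> dom x" "u' \<subseteq> v" "i \<in> u'" unfolding blocks_in_def by blast
  then have "u' = u" using partition_on_eq_block[OF PiP_partition[OF x] _ u] i by blast
  then show ?thesis using v(1) u'(2) by blast
qed

lemma le_Pi_antisym:
  assumes le1: "le_Pi P cmp I x y" and le2: "le_Pi P cmp I y x" and fI: "finite I"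
  shows "x = y"
proof -
  have x: "x \<in> PiP P I" and y: "y \<in> PiP P I" using le_PiD[OF le1 fI] by auto
  have dom_sub: "dom b \<subseteq> dom a" if ab: "le_Pi P cmp I a b" and ba: "le_Pi P cmp I b a" for a b
  proof
    fix w assume w: "w \<in> dom b"
    have b: "b \<in> PiP P I" using le_PiD[OF ab fI] by auto
    obtain u where u: "u \<in> dom a" "w \<subseteq> u" using le_Pi_block_refines[OF ba fI w] by blast
    obtain w' where w': "w' \<in> dom b" "u \<subseteq> w'" using le_Pi_block_refines[OF ab fI u(1)] by blast
    obtain i where "i \<in> w" using partition_on_block_nonempty[OF PiP_partition[OF b] w] by blast
    then have "w' = w" using partition_on_eq_block[OF PiP_partition[OF b] w'(1) w] u w' by blast
    then show "w \<in> dom a" using u w' by auto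
  qed
  have dom: "dom x = dom y" using dom_sub[OF le1 le2] dom_sub[OF le2 le1] by blast
  show "x = y"
  proof (rule map_eqI[OF dom])
    fix w assume w: "w \<in> dom y"
    show "the (x w) = the (y w)"
      using le_PiD(3)[OF le1 fI w] composite_own_block_iff[OF x fI] dom w by simp
  qed
qed

text \<open>Associativity, with the blocks of \<open>x\<close> inside \<open>w\<close> grouped along the blocks of \<open>y\<close>
  inside \<open>w\<close>.\<close>

lemma composite_trans:
  assumes x: "x \<in> PiP P I" and y: "y \<in> PiP P I" and fI: "finite I"
    and yx: "\<And>v. v \<in> blocks_in y w \<Longrightarrow> \<Union>(blocks_in x v) = v \<and> composite x v (the (y v))"
    and cover: "\<Union>(blocks_in y w) = w" and p: "composite y w p"
  shows "composite x w p"
proof -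
  obtain L b q where fL: "finite L" and b: "bij_betw b L (blocks_in y w)" and q: "q \<in> P L"
    and p: "p = cmp L q b (\<lambda>l. the (y (b l)))"
    using p unfolding composite_def by blast
  have bx: "blocks_in x w \<subseteq> dom x" and "blocks_in y w \<subseteq> dom y" unfolding blocks_in_def by blast+
  then have caL: "comp_args P L b (\<lambda>l. the (y (b l)))" using comp_args_blocks[OF y fI b _ fL] by blast
  obtain B where B: "bij_betw B {0..<card (blocks_in x w)} (blocks_in x w)"
    using ex_bij_betw_nat_finite finite_subset[OF bx finite_elements[OF fI PiP_partition[OF x]]] by blast
  define M where "M = {0..<card (blocks_in x w)}"
  have fM: "finite M" unfolding M_def by simp
  have B: "bij_betw B M (blocks_in x w)" using B unfolding M_def .
  define K where "K = labels_in B M"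
  have W: "partition_on w (blocks_in y w)" by (rule partition_on_blocks_in[OF y cover])
  have part: "partition_on M (K ` blocks_in y w)" and inj: "inj_on K (blocks_in y w)"
    using partition_on_labels_in[OF x B W] yx unfolding K_def by blast+
  have "v \<subseteq> w \<and> composite x v (the (y v))" if "v \<in> blocks_in y w" for v
    using that yx unfolding blocks_in_def by blast
  then obtain r where r: "\<And>v. v \<in> blocks_in y w \<Longrightarrow> r v \<in> P (K v)
      \<and> the (y v) = cmp (K v) (r v) B (\<lambda>m. the (x (B m)))"
    using composite_choice[OF x fI B fM, of "blocks_in y w" "\<lambda>v. the (y v)"] unfolding K_def by blast
  have bl: "b l \<in> blocks_in y w" if "l \<in> L" for l using bij_betw_apply[OF b that] .
  have caK: "comp_args P L (K \<circ> b) (r \<circ> b)"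
    unfolding comp_args_def
  proof (intro conjI ballI)
    show "disjoint_family_on (K \<circ> b) L"
    proof (rule disjoint_image_disjoint_family_on)
      show "disjoint ((K \<circ> b) ` L)"
        using partition_onD2[OF part] bij_betw_imp_surj_on[OF b] by (metis image_comp)
      show "inj_on (K \<circ> b) L"
        using comp_inj_on[OF bij_betw_imp_inj_on[OF b]] inj bij_betw_imp_surj_on[OF b] by simp
    qed
  qed (use fL fM r bl in \<open>auto simp: K_def labels_in_def intro: finite_subset\<close>)
  have UK: "\<Union>((K \<circ> b) ` L) = M"
    using partition_onD1[OF part] bij_betw_imp_surj_on[OF b] by (metis image_comp)
  have UBK: "\<Union>(B ` K (b l)) = b l" if "l \<in> L" for l
    using bij_betw_imp_surj_on[OF bij_betw_labels_in[OF B, of "b l"]] bl[OF that] yx[OF bl[OF that]]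
    unfolding K_def blocks_in_def by auto
  have caM: "comp_args P (\<Union>((K \<circ> b) ` L)) B (\<lambda>m. the (x (B m)))"
    using comp_args_blocks[OF x fI B bx fM] UK by simp
  have "cmp M (cmp L q (K \<circ> b) (r \<circ> b)) B (\<lambda>m. the (x (B m)))
      = cmp L q (\<lambda>l. \<Union>(B ` (K \<circ> b) l)) (\<lambda>l. cmp ((K \<circ> b) l) ((r \<circ> b) l) B (\<lambda>m. the (x (B m))))"
    using cmp_assoc[OF q caK caM] UK by simp
  also have "\<dots> = p"
    unfolding p by (rule sym, rule cmp_cong[OF q caL]) (simp_all add: UBK r bl)
  finally show ?thesis
    unfolding composite_def using fM B cmp_in[OF q caK] UK by metis
qed

lemma le_Pi_trans:
  assumes le1: "le_Pi P cmp I x y" and le2: "le_Pi P cmp I y z" and fI: "finite I"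
  shows "le_Pi P cmp I x z"
  unfolding le_Pi_iff[OF fI]
proof (intro conjI ballI)
  show x: "x \<in> PiP P I" and "z \<in> PiP P I" using le_PiD(1)[OF le1 fI] le_PiD(2)[OF le2 fI] .
  have y: "y \<in> PiP P I" using le_PiD(2)[OF le1 fI] .
  fix w assume w: "w \<in> dom z"
  have yx: "\<Union>(blocks_in x v) = v \<and> composite x v (the (y v))" if "v \<in> blocks_in y w" for v
    using le_PiD(3)[OF le1 fI] that unfolding blocks_in_def by blast
  have zy: "\<Union>(blocks_in y w) = w" "composite y w (the (z w))" using le_PiD(3)[OF le2 fI w] by auto
  show "composite x w (the (z w))" by (rule composite_trans[OF x y fI yx zy])
  show "\<Union>(blocks_in x w) = w"
  proof
    show "w \<subseteq> \<Union>(blocks_in x w)"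
    proof
      fix i assume "i \<in> w"
      then obtain v where v: "v \<in> blocks_in y w" "i \<in> v" using zy(1) by blast
      then obtain u where "u \<in> blocks_in x v" "i \<in> u" using yx[OF v(1)] by blast
      then show "i \<in> \<Union>(blocks_in x w)" using v(1) unfolding blocks_in_def by blast
    qed
  qed (auto simp: blocks_in_def)
qed

lemma pi_zero_PiP:
  assumes "finite I" shows "pi_zero e I \<in> PiP P I"
proof -
  have dom: "dom (pi_zero e I) = (\<lambda>i. {i}) ` I" unfolding pi_zero_def by (auto split: if_splits)
  have "the (pi_zero e I u) \<in> P u" if "u \<in> dom (pi_zero e I)" for u
    using that dom unit_in unfolding pi_zero_def by auto
  then show ?thesis unfolding PiP_def using dom partition_on_singletons by auto
qed

lemma pi_zero_le:
  assumes y: "y \<in> PiP P I" and fI: "finite I"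
  shows "le_Pi P cmp I (pi_zero e I) y"
  unfolding le_Pi_iff[OF fI]
proof (intro conjI ballI pi_zero_PiP fI y)
  fix w assume w: "w \<in> dom y"
  have wI: "w \<subseteq> I" using partition_on_block_subset[OF PiP_partition[OF y] w] .
  have blocks: "blocks_in (pi_zero e I) w = (\<lambda>i. {i}) ` w"
    using wI unfolding blocks_in_def pi_zero_def by (auto split: if_splits)
  then show "\<Union>(blocks_in (pi_zero e I) w) = w" by simp
  have fw: "finite w" using finite_subset[OF wI fI] .
  have yw: "the (y w) \<in> P w" using PiP_value[OF y w] .
  have ca: "comp_args P w (\<lambda>i. {i}) e"
    unfolding comp_args_def disjoint_family_on_def using fw unit_in by auto
  have "the (y w) = cmp w (the (y w)) (\<lambda>i. {i}) e" using cmp_unit_right[OF fw yw] by simp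
  also have "\<dots> = cmp w (the (y w)) (\<lambda>i. {i}) (\<lambda>l. the (pi_zero e I {l}))"
    by (rule cmp_cong[OF yw ca]) (use wI in \<open>auto simp: pi_zero_def\<close>)
  finally show "composite (pi_zero e I) w (the (y w))"
    unfolding composite_def blocks using fw yw
    by (intro exI[of _ w] exI[of _ "\<lambda>i. {i}"] exI[of _ "the (y w)"]) (auto simp: bij_betw_def inj_on_def)
qed

end

lemma poset_iso_sym:
  assumes "poset_iso X lx Y ly" shows "poset_iso Y ly X lx"
proof -
  obtain f where f: "bij_betw f X Y" and ord: "\<forall>a\<in>X. \<forall>b\<in>X. lx a b \<longleftrightarrow> ly (f a) (f b)"
    using assms unfolding poset_iso_def by blast
  have "ly a b \<longleftrightarrow> lx (inv_into X f a) (inv_into X f b)" if "a \<in> Y" "b \<in> Y" for a b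
    using ord bij_betw_apply[OF bij_betw_inv_into[OF f]] bij_betw_inv_into_right[OF f] that by metis
  then show ?thesis unfolding poset_iso_def using bij_betw_inv_into[OF f] by blast
qed

lemma poset_iso_trans:
  assumes "poset_iso X lx Y ly" "poset_iso Y ly Z lz" shows "poset_iso X lx Z lz"
proof -
  obtain f where f: "bij_betw f X Y" and o1: "\<forall>a\<in>X. \<forall>b\<in>X. lx a b \<longleftrightarrow> ly (f a) (f b)"
    using assms(1) unfolding poset_iso_def by blast
  obtain g where g: "bij_betw g Y Z" and o2: "\<forall>a\<in>Y. \<forall>b\<in>Y. ly a b \<longleftrightarrow> lz (g a) (g b)"
    using assms(2) unfolding poset_iso_def by blast
  have "lx a b \<longleftrightarrow> lz ((g \<circ> f) a) ((g \<circ> f) b)" if "a \<in> X" "b \<in> X" for a b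
    using o1 o2 bij_betw_apply[OF f] that by simp
  then show ?thesis unfolding poset_iso_def using bij_betw_trans[OF f g] by blast
qed

text \<open>An order embedding of a poset is injective.\<close>

lemma poset_iso_of_embedding:
  assumes X: "is_poset X lx" and ord: "\<And>a b. a \<in> X \<Longrightarrow> b \<in> X \<Longrightarrow> lx a b \<longleftrightarrow> ly (f a) (f b)"
    and img: "f ` X = Y"
  shows "poset_iso X lx Y ly"
proof -
  have "inj_on f X"
  proof (rule inj_onI)
    fix a b assume a: "a \<in> X" and b: "b \<in> X" and eq: "f a = f b"
    have "lx a a" "lx b b" using X a b unfolding is_poset_def by auto
    then have "lx a b" "lx b a" using ord[OF a b] ord[OF b a] ord[OF a a] ord[OF b b] eq by auto
    then show "a = b" using X a b unfolding is_poset_def by blast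
  qed
  then show ?thesis unfolding poset_iso_def bij_betw_def using img ord by blast
qed

lemma poset_iso_prod:
  assumes len: "length is = n"
    and iso: "\<And>k. k < n \<Longrightarrow> poset_iso (C1 k) (l1 k) (C2 (is ! k)) (l2 (is ! k))"
  shows "poset_iso (prod_carrier C1 [0..<n]) (prod_le l1 [0..<n]) (prod_carrier C2 is) (prod_le l2 is)"
proof -
  obtain f where f: "\<And>k. k < n \<Longrightarrow> bij_betw (f k) (C1 k) (C2 (is ! k))"
    and ord: "\<And>k a b. k < n \<Longrightarrow> a \<in> C1 k \<Longrightarrow> b \<in> C1 k \<Longrightarrow> l1 k a b \<longleftrightarrow> l2 (is ! k) (f k a) (f k b)"
    using iso unfolding poset_iso_def by metis
  define F where "F ts = map (\<lambda>k. f k (ts ! k)) [0..<n]" for ts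
  define G where "G us = map (\<lambda>k. inv_into (C1 k) (f k) (us ! k)) [0..<n]" for us
  have C1: "ts \<in> prod_carrier C1 [0..<n] \<longleftrightarrow> length ts = n \<and> (\<forall>k<n. ts ! k \<in> C1 k)" for ts
    unfolding prod_carrier_def by simp
  have C2: "us \<in> prod_carrier C2 is \<longleftrightarrow> length us = n \<and> (\<forall>k<n. us ! k \<in> C2 (is ! k))" for us
    unfolding prod_carrier_def using len by simp
  have "bij_betw F (prod_carrier C1 [0..<n]) (prod_carrier C2 is)"
  proof (rule bij_betwI[where g = G])
    show "F \<in> prod_carrier C1 [0..<n] \<rightarrow> prod_carrier C2 is"
      using bij_betw_apply[OF f] by (auto simp: F_def C1 C2)
    show "G \<in> prod_carrier C2 is \<rightarrow> prod_carrier C1 [0..<n]"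
      using bij_betw_apply[OF bij_betw_inv_into[OF f]] by (auto simp: G_def C1 C2)
    show "G (F ts) = ts" if "ts \<in> prod_carrier C1 [0..<n]" for ts
      using that bij_betw_inv_into_left[OF f] by (intro nth_equalityI) (auto simp: F_def G_def C1)
    show "F (G us) = us" if "us \<in> prod_carrier C2 is" for us
      using that bij_betw_inv_into_right[OF f] by (intro nth_equalityI) (auto simp: F_def G_def C2)
  qed
  moreover have "prod_le l1 [0..<n] ts ts' \<longleftrightarrow> prod_le l2 is (F ts) (F ts')"
    if "ts \<in> prod_carrier C1 [0..<n]" "ts' \<in> prod_carrier C1 [0..<n]" for ts ts'
    using that ord len by (auto simp: prod_le_def F_def C1)
  ultimately show ?thesis unfolding poset_iso_def by blast
qed

lemma poset_iso_singleton_prod: "poset_iso (C i) (l i) (prod_carrier C [i]) (prod_le l [i])"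
proof -
  have "bij_betw (\<lambda>t. [t]) (C i) (prod_carrier C [i])"
  proof (rule bij_betwI[where g = hd])
    show "(\<lambda>t. [t]) \<in> C i \<rightarrow> prod_carrier C [i]" unfolding prod_carrier_def by auto
    show "hd \<in> prod_carrier C [i] \<rightarrow> C i" unfolding prod_carrier_def by (auto simp: length_Suc_conv)
    show "[hd ts] = ts" if "ts \<in> prod_carrier C [i]" for ts
      using that unfolding prod_carrier_def by (cases ts) auto
  qed simp
  then show ?thesis unfolding poset_iso_def prod_le_def by (intro exI[of _ "\<lambda>t. [t]"]) simp
qed


section \<open>Upper intervals\<close>

context aug_basic_operad
begin

lemma blocks_in_compfam:
  assumes x: "x \<in> PiP P I" and b: "bij_betw b L (dom x)" and a: "a \<in> PiP P L" and v: "v \<subseteq> L"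
  shows "blocks_in (compfam cmp b a x) (\<Union>(b ` v)) = (\<lambda>u. \<Union>(b ` u)) ` blocks_in a v"
proof -
  have iff: "\<Union>(b ` u) \<subseteq> \<Union>(b ` v) \<longleftrightarrow> u \<subseteq> v" if "u \<in> dom a" for u
    using label_union_subset_iff[OF x b partition_on_block_subset[OF PiP_partition[OF a] that] v] .
  show ?thesis
  proof
    show "blocks_in (compfam cmp b a x) (\<Union>(b ` v)) \<subseteq> (\<lambda>u. \<Union>(b ` u)) ` blocks_in a v"
      unfolding blocks_in_def compfam_dom[OF x b a] using iff by blast
    show "(\<lambda>u. \<Union>(b ` u)) ` blocks_in a v \<subseteq> blocks_in (compfam cmp b a x) (\<Union>(b ` v))"
      unfolding blocks_in_def compfam_dom[OF x b a] using iff by blast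
  qed
qed

lemma bij_betw_compfam_blocks:
  assumes x: "x \<in> PiP P I" and b: "bij_betw b L (dom x)" and a: "a \<in> PiP P L" and v: "v \<subseteq> L"
    and B: "bij_betw B M (blocks_in a v)"
  shows "bij_betw (\<lambda>m. \<Union>(b ` B m)) M (blocks_in (compfam cmp b a x) (\<Union>(b ` v)))"
proof -
  have "inj_on (\<lambda>u. \<Union>(b ` u)) (blocks_in a v)"
  proof (rule inj_onI)
    fix u u' assume "u \<in> blocks_in a v" "u' \<in> blocks_in a v" and eq: "\<Union>(b ` u) = \<Union>(b ` u')"
    then have "u \<subseteq> L" "u' \<subseteq> L"
      using partition_on_block_subset[OF PiP_partition[OF a]] unfolding blocks_in_def by auto
    then show "u = u'" using label_union_inj[OF x b _ _ eq] by blast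
  qed
  then show ?thesis
    using bij_betw_trans[OF B inj_on_imp_bij_betw] blocks_in_compfam[OF x b a v]
    unfolding comp_def by simp
qed

lemma cmp_compfam_blocks:
  assumes x: "x \<in> PiP P I" and fI: "finite I" and b: "bij_betw b L (dom x)" and a: "a \<in> PiP P L"
    and v: "v \<subseteq> L" and cover: "\<Union>(blocks_in a v) = v"
    and fM: "finite M" and B: "bij_betw B M (blocks_in a v)" and q: "q \<in> P M"
  shows "cmp v (cmp M q B (\<lambda>m. the (a (B m)))) b (\<lambda>l. the (x (b l)))
    = cmp M q (\<lambda>m. \<Union>(b ` B m)) (\<lambda>m. the (compfam cmp b a x (\<Union>(b ` B m))))"
proof -
  have sub: "blocks_in a v \<subseteq> dom a" unfolding blocks_in_def by blast
  have caM: "comp_args P M B (\<lambda>m. the (a (B m)))"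
    by (rule comp_args_blocks[OF a finite_labels[OF x fI b] B sub fM])
  have UB: "\<Union>(B ` M) = v" using cover bij_betw_imp_surj_on[OF B] by simp
  have Bd: "B m \<in> dom a" if "m \<in> M" for m using bij_betw_apply[OF B that] sub by blast
  have "blocks_in (compfam cmp b a x) (\<Union>(b ` v)) \<subseteq> dom (compfam cmp b a x)"
    unfolding blocks_in_def by blast
  then have caF: "comp_args P M (\<lambda>m. \<Union>(b ` B m)) (\<lambda>m. the (compfam cmp b a x (\<Union>(b ` B m))))"
    by (rule comp_args_blocks[OF compfam_PiP[OF x fI b a] fI bij_betw_compfam_blocks[OF x b a v B] _ fM])
  have "cmp v (cmp M q B (\<lambda>m. the (a (B m)))) b (\<lambda>l. the (x (b l)))
      = cmp M q (\<lambda>m. \<Union>(b ` B m)) (\<lambda>m. cmp (B m) (the (a (B m))) b (\<lambda>l. the (x (b l))))"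
    using cmp_assoc[OF q caM] comp_args_label_subset[OF x fI b v] UB by simp
  also have "\<dots> = cmp M q (\<lambda>m. \<Union>(b ` B m)) (\<lambda>m. the (compfam cmp b a x (\<Union>(b ` B m))))"
    by (rule sym, rule cmp_cong[OF q caF]) (simp_all add: compfam_at[OF x b a Bd])
  finally show ?thesis .
qed

text \<open>Basicness: composing with \<open>x\<close> is injective.\<close>

lemma composite_compfam_iff:
  assumes x: "x \<in> PiP P I" and fI: "finite I" and b: "bij_betw b L (dom x)" and a: "a \<in> PiP P L"
    and v: "v \<subseteq> L" and cover: "\<Union>(blocks_in a v) = v" and p: "p \<in> P v"
  shows "composite (compfam cmp b a x) (\<Union>(b ` v)) (cmp v p b (\<lambda>l. the (x (b l))))
    \<longleftrightarrow> composite a v p"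
proof
  assume "composite a v p"
  then obtain M B q where fM: "finite M" and B: "bij_betw B M (blocks_in a v)" and q: "q \<in> P M"
    and "p = cmp M q B (\<lambda>m. the (a (B m)))"
    unfolding composite_def by blast
  then show "composite (compfam cmp b a x) (\<Union>(b ` v)) (cmp v p b (\<lambda>l. the (x (b l))))"
    unfolding composite_def
    using cmp_compfam_blocks[OF x fI b a v cover] bij_betw_compfam_blocks[OF x b a v] by blast
next
  assume comp: "composite (compfam cmp b a x) (\<Union>(b ` v)) (cmp v p b (\<lambda>l. the (x (b l))))"
  define M where "M = {0..<card (blocks_in a v)}"
  have fM: "finite M" unfolding M_def by simp
  have "finite (blocks_in a v)"
    using finite_elements[OF finite_labels[OF x fI b] PiP_partition[OF a]] unfolding blocks_in_def by simp
  then obtain B where B: "bij_betw B M (blocks_in a v)" using ex_bij_betw_nat_finite unfolding M_def by blast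
  then obtain q where q: "q \<in> P M"
    and eq: "cmp v p b (\<lambda>l. the (x (b l))) = cmp v (cmp M q B (\<lambda>m. the (a (B m)))) b (\<lambda>l. the (x (b l)))"
    using composite_any_labelling[OF compfam_PiP[OF x fI b a] fI comp fM bij_betw_compfam_blocks[OF x b a v B]]
      cmp_compfam_blocks[OF x fI b a v cover fM B] by auto
  have "cmp M q B (\<lambda>m. the (a (B m))) \<in> P v"
    using cmp_in[OF q comp_args_blocks[OF a finite_labels[OF x fI b] B _ fM]] cover bij_betw_imp_surj_on[OF B]
    unfolding blocks_in_def by auto
  then have "p = cmp M q B (\<lambda>m. the (a (B m)))"
    by (rule cmp_inj[OF comp_args_label_subset[OF x fI b v] p _ eq])
  then show "composite a v p" unfolding composite_def using fM B q by blast
qed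

lemma compfam_le_iff:
  assumes x: "x \<in> PiP P I" and fI: "finite I" and b: "bij_betw b L (dom x)"
    and a: "a \<in> PiP P L" and a': "a' \<in> PiP P L"
  shows "le_Pi P cmp I (compfam cmp b a x) (compfam cmp b a' x) \<longleftrightarrow> le_Pi P cmp L a a'"
proof -
  have fL: "finite L" by (rule finite_labels[OF x fI b])
  have cover_iff: "\<Union>(blocks_in (compfam cmp b a x) (\<Union>(b ` v))) = \<Union>(b ` v) \<longleftrightarrow> \<Union>(blocks_in a v) = v"
    if v: "v \<subseteq> L" for v
  proof -
    have "\<Union>(blocks_in (compfam cmp b a x) (\<Union>(b ` v))) = \<Union>(b ` \<Union>(blocks_in a v))"
      using blocks_in_compfam[OF x b a v] by auto
    moreover have "\<Union>(blocks_in a v) \<subseteq> L" using v unfolding blocks_in_def by blast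
    ultimately show ?thesis using label_union_inj[OF x b _ v] by metis
  qed
  have "(\<Union>(blocks_in (compfam cmp b a x) (\<Union>(b ` v))) = \<Union>(b ` v)
      \<and> composite (compfam cmp b a x) (\<Union>(b ` v)) (the (compfam cmp b a' x (\<Union>(b ` v)))))
    \<longleftrightarrow> (\<Union>(blocks_in a v) = v \<and> composite a v (the (a' v)))" if v: "v \<in> dom a'" for v
  proof -
    have vL: "v \<subseteq> L" by (rule partition_on_block_subset[OF PiP_partition[OF a'] v])
    show ?thesis
      using cover_iff[OF vL] composite_compfam_iff[OF x fI b a vL _ PiP_value[OF a' v]]
        compfam_at[OF x b a' v] by auto
  qed
  then show ?thesis
    unfolding le_Pi_iff[OF fI] le_Pi_iff[OF fL] compfam_dom[OF x b a']
    using compfam_PiP[OF x fI b] a a' by auto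
qed

lemma upper_set_eq_compfam_image:
  assumes x: "x \<in> PiP P I" and fI: "finite I" and b: "bij_betw b L (dom x)"
  shows "{y. le_Pi P cmp I x y} = (\<lambda>a. compfam cmp b a x) ` PiP P L"
proof
  show "{y. le_Pi P cmp I x y} \<subseteq> (\<lambda>a. compfam cmp b a x) ` PiP P L"
    using refinement_eq_compfam[OF x _ fI _ b] le_PiD[OF _ fI] by blast
  show "(\<lambda>a. compfam cmp b a x) ` PiP P L \<subseteq> {y. le_Pi P cmp I x y}"
    unfolding le_Pi_def using x compfam_PiP[OF x fI b] finite_labels[OF x fI b] b by blast
qed

lemma one_block_PiP:
  assumes p: "p \<in> P L" shows "one_block L p \<in> PiP P L"
  using partition_on_space[OF P_nonempty_index[OF p]] p unfolding PiP_def one_block_def by auto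

lemma compfam_eq_one_block:
  assumes x: "x \<in> PiP P I" and b: "bij_betw b L (dom x)" and a: "a \<in> PiP P L"
    and eq: "compfam cmp b a x = one_block I p"
  shows "the (a L) \<in> P L" and "a = one_block L (the (a L))"
proof -
  have "dom a \<subseteq> {L}"
  proof
    fix v assume v: "v \<in> dom a"
    have "\<Union>(b ` v) \<in> dom (compfam cmp b a x)" using compfam_dom[OF x b a] v by blast
    then have "\<Union>(b ` v) = \<Union>(b ` L)" using eq label_union_all[OF x b] unfolding one_block_def by simp
    then show "v \<in> {L}"
      using label_union_inj[OF x b partition_on_block_subset[OF PiP_partition[OF a] v]] by blast
  qed
  moreover have "dom a \<noteq> {}"
    using compfam_dom[OF x b a] eq unfolding one_block_def by auto
  ultimately have dom: "dom a = {L}" by blast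
  then show "the (a L) \<in> P L" using PiP_value[OF a] by simp
  show "a = one_block L (the (a L))"
    by (rule map_eqI) (use dom in \<open>auto simp: one_block_def\<close>)
qed

definition zero_interval :: "nat set \<Rightarrow> 'b \<Rightarrow> (nat set \<Rightarrow> 'b option) set" where
  "zero_interval L p = {y \<in> PiP P L. le_Pi P cmp L (pi_zero e L) y \<and> le_Pi P cmp L y (one_block L p)}"

lemma zero_interval_eq:
  "finite L \<Longrightarrow> zero_interval L p = {y \<in> PiP P L. le_Pi P cmp L y (one_block L p)}"
  unfolding zero_interval_def using pi_zero_le by blast

lemma is_poset_le_Pi: "finite I \<Longrightarrow> X \<subseteq> PiP P I \<Longrightarrow> is_poset X (le_Pi P cmp I)"
  unfolding is_poset_def using le_Pi_refl le_Pi_antisym le_Pi_trans by blast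

lemma interval_above_iso_compfam:
  assumes x: "x \<in> PiP P I" and fI: "finite I" and b: "bij_betw b L (dom x)" and at: "at \<in> PiP P L"
  shows "poset_iso {a \<in> PiP P L. le_Pi P cmp L a at} (le_Pi P cmp L)
    {y \<in> PiP P I. le_Pi P cmp I x y \<and> le_Pi P cmp I y (compfam cmp b at x)} (le_Pi P cmp I)"
proof -
  define F where "F a = compfam cmp b a x" for a
  have upper: "{y. le_Pi P cmp I x y} = F ` PiP P L"
    unfolding F_def by (rule upper_set_eq_compfam_image[OF x fI b])
  have Fle: "le_Pi P cmp L a a' \<longleftrightarrow> le_Pi P cmp I (F a) (F a')"
    if "a \<in> PiP P L" "a' \<in> PiP P L" for a a'
    unfolding F_def using compfam_le_iff[OF x fI b that] by simp
  have img: "F ` {a \<in> PiP P L. le_Pi P cmp L a at}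
      = {y \<in> PiP P I. le_Pi P cmp I x y \<and> le_Pi P cmp I y (F at)}"
  proof (intro equalityI subsetI)
    fix y assume "y \<in> F ` {a \<in> PiP P L. le_Pi P cmp L a at}"
    then obtain a where a: "a \<in> PiP P L" "le_Pi P cmp L a at" and y: "y = F a" by blast
    have "le_Pi P cmp I x y" using upper a(1) y by blast
    moreover have "le_Pi P cmp I y (F at)" using Fle[OF a(1) at] a(2) y by simp
    ultimately show "y \<in> {y \<in> PiP P I. le_Pi P cmp I x y \<and> le_Pi P cmp I y (F at)}"
      using le_PiD(2)[OF _ fI] by blast
  next
    fix y assume y: "y \<in> {y \<in> PiP P I. le_Pi P cmp I x y \<and> le_Pi P cmp I y (F at)}"
    then obtain a where a: "a \<in> PiP P L" "y = F a" using upper by blast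
    then have "le_Pi P cmp L a at" using Fle[OF a(1) at] y by simp
    then show "y \<in> F ` {a \<in> PiP P L. le_Pi P cmp L a at}" using a by blast
  qed
  have ord: "le_Pi P cmp L a a' \<longleftrightarrow> le_Pi P cmp I (F a) (F a')"
    if "a \<in> {a \<in> PiP P L. le_Pi P cmp L a at}" "a' \<in> {a \<in> PiP P L. le_Pi P cmp L a at}" for a a'
    using Fle that by blast
  have "is_poset {a \<in> PiP P L. le_Pi P cmp L a at} (le_Pi P cmp L)"
    by (rule is_poset_le_Pi[OF finite_labels[OF x fI b]]) blast
  from poset_iso_of_embedding[where ly = "le_Pi P cmp I", OF this ord img] show ?thesis
    unfolding F_def .
qed

text \<open>The upper interval \<open>[x, p]\<close> is isomorphic to \<open>[0, q]\<close>, where \<open>p = q \<circ> x\<close> with \<open>q\<close> on the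
  blocks of \<open>x\<close>, relabelled by \<open>{1..k}\<close>.\<close>

lemma upper_interval_iso:
  assumes x: "x \<in> PiP P I" and fI: "finite I" and p: "p \<in> P I"
    and le: "le_Pi P cmp I x (one_block I p)"
  obtains k q where "q \<in> P {1..k}"
    "poset_iso {y \<in> PiP P I. le_Pi P cmp I x y \<and> le_Pi P cmp I y (one_block I p)} (le_Pi P cmp I)
               (zero_interval {1..k} q) (le_Pi P cmp {1..k})"
proof -
  define L where "L = {1..card (dom x)}"
  obtain b where b: "bij_betw b L (dom x)"
    using ex_bij_betw_nat_finite_1[OF finite_elements[OF fI PiP_partition[OF x]]] unfolding L_def by blast
  have "one_block I p \<in> (\<lambda>a. compfam cmp b a x) ` PiP P L"
    using le upper_set_eq_compfam_image[OF x fI b] by blast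
  then obtain at where at: "at \<in> PiP P L" and top: "compfam cmp b at x = one_block I p" by auto
  define q where "q = the (at L)"
  have q: "q \<in> P L" and atq: "at = one_block L q"
    using compfam_eq_one_block[OF x b at top] unfolding q_def by auto
  have "zero_interval L q = {a \<in> PiP P L. le_Pi P cmp L a at}"
    unfolding atq L_def by (rule zero_interval_eq) simp
  then have "poset_iso (zero_interval L q) (le_Pi P cmp L)
      {y \<in> PiP P I. le_Pi P cmp I x y \<and> le_Pi P cmp I y (one_block I p)} (le_Pi P cmp I)"
    using interval_above_iso_compfam[OF x fI b at] top by simp
  then show thesis using that q poset_iso_sym unfolding L_def by blast
qed

end

section \<open>Relabelling along a bijection\<close>

context aug_basic_operad
begin

definition transport :: "(nat \<Rightarrow> nat) \<Rightarrow> (nat set \<Rightarrow> 'b option) \<Rightarrow> (nat set \<Rightarrow> 'b option)" where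
  "transport s y = (\<lambda>w. if \<exists>u\<in>dom y. w = s ` u
      then (let u = (THE u. u \<in> dom y \<and> w = s ` u) in Some (ren u s (the (y u))))
      else None)"

lemma transport_at:
  assumes s: "inj_on s L" and y: "y \<in> PiP P L" and u: "u \<in> dom y"
  shows "transport s y (s ` u) = Some (ren u s (the (y u)))"
proof -
  have sub: "u' \<subseteq> L" if "u' \<in> dom y" for u'
    using partition_on_block_subset[OF PiP_partition[OF y] that] .
  have "(THE u'. u' \<in> dom y \<and> s ` u = s ` u') = u"
    using u inj_on_image_eq_iff[OF s sub sub] by (intro the_equality) auto
  then show ?thesis unfolding transport_def using u by (auto simp: Let_def)
qed

lemma transport_dom:
  assumes s: "inj_on s L" and y: "y \<in> PiP P L"
  shows "dom (transport s y) = (`) s ` dom y"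
proof
  show "dom (transport s y) \<subseteq> (`) s ` dom y"
  proof
    fix w assume "w \<in> dom (transport s y)"
    then have "\<exists>u\<in>dom y. w = s ` u" unfolding transport_def by (auto split: if_splits)
    then show "w \<in> (`) s ` dom y" by blast
  qed
  show "(`) s ` dom y \<subseteq> dom (transport s y)" using transport_at[OF s y] by blast
qed

lemma transport_PiP:
  assumes s: "bij_betw s L L'" and y: "y \<in> PiP P L" and fL: "finite L"
  shows "transport s y \<in> PiP P L'"
proof -
  have inj: "inj_on s L" using s by (rule bij_betw_imp_inj_on)
  have sub: "u \<subseteq> L" if "u \<in> dom y" for u using partition_on_block_subset[OF PiP_partition[OF y] that] .
  have "partition_on (s ` L) ((`) s ` dom y - {{}})"
    by (rule partition_on_inj_image[OF PiP_partition[OF y] inj])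
  moreover have "{} \<notin> (`) s ` dom y"
    using partition_on_block_nonempty[OF PiP_partition[OF y]] by blast
  ultimately have "partition_on L' ((`) s ` dom y)"
    using bij_betw_imp_surj_on[OF s] by simp
  moreover have "the (transport s y w) \<in> P w" if w: "w \<in> (`) s ` dom y" for w
  proof -
    obtain u where u: "u \<in> dom y" and w: "w = s ` u" using w by blast
    have "ren u s (the (y u)) \<in> P (s ` u)"
      by (rule ren_in[OF finite_subset[OF sub[OF u] fL] bij_betw_subset[OF s sub[OF u] refl] PiP_value[OF y u]])
    then show ?thesis using transport_at[OF inj y u] w by simp
  qed
  ultimately show ?thesis unfolding PiP_def using transport_dom[OF inj y] by simp
qed

lemma blocks_in_transport:
  assumes s: "inj_on s L" and y: "y \<in> PiP P L" and w: "w \<subseteq> L"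
  shows "blocks_in (transport s y) (s ` w) = (`) s ` blocks_in y w"
proof -
  have "s ` u \<subseteq> s ` w \<longleftrightarrow> u \<subseteq> w" if "u \<in> dom y" for u
    using s partition_on_block_subset[OF PiP_partition[OF y] that] w unfolding inj_on_def by blast
  then show ?thesis unfolding blocks_in_def transport_dom[OF s y] by blast
qed

text \<open>Equivariance of the composition in its inputs.\<close>

lemma composite_transport:
  assumes s: "bij_betw s L L'" and fL: "finite L" and y: "y \<in> PiP P L" and w: "w \<subseteq> L"
    and cover: "\<Union>(blocks_in y w) = w" and p: "composite y w p"
  shows "composite (transport s y) (s ` w) (ren w s p)"
proof -
  have inj: "inj_on s L" using s by (rule bij_betw_imp_inj_on)
  obtain M B q where fM: "finite M" and B: "bij_betw B M (blocks_in y w)" and q: "q \<in> P M"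
    and p: "p = cmp M q B (\<lambda>m. the (y (B m)))" using p unfolding composite_def by blast
  have sub: "blocks_in y w \<subseteq> dom y" unfolding blocks_in_def by blast
  have caM: "comp_args P M B (\<lambda>m. the (y (B m)))" by (rule comp_args_blocks[OF y fL B sub fM])
  have UB: "\<Union>(B ` M) = w" using cover bij_betw_imp_surj_on[OF B] by simp
  have Bd: "B m \<in> dom y" if "m \<in> M" for m using bij_betw_apply[OF B that] sub by blast
  have injB: "inj_on ((`) s) (blocks_in y w)"
  proof (rule inj_onI)
    fix u u' assume "u \<in> blocks_in y w" "u' \<in> blocks_in y w" and eq: "s ` u = s ` u'"
    then have "u \<subseteq> L" "u' \<subseteq> L" using w unfolding blocks_in_def by auto
    then show "u = u'" using inj_on_image_eq_iff[OF inj] eq by blast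
  qed
  have SB: "bij_betw (\<lambda>m. s ` B m) M (blocks_in (transport s y) (s ` w))"
    using bij_betw_trans[OF B inj_on_imp_bij_betw[OF injB]] blocks_in_transport[OF inj y w]
    unfolding comp_def by simp
  have fL': "finite L'" using bij_betw_finite[OF s] fL by blast
  have "blocks_in (transport s y) (s ` w) \<subseteq> dom (transport s y)" unfolding blocks_in_def by blast
  then have caS: "comp_args P M (\<lambda>m. s ` B m) (\<lambda>m. the (transport s y (s ` B m)))"
    by (rule comp_args_blocks[OF transport_PiP[OF s y fL] fL' SB _ fM])
  have "ren w s p = ren (\<Union>(B ` M)) s (cmp M q B (\<lambda>m. the (y (B m))))" using p UB by simp
  also have "\<dots> = cmp M q (\<lambda>m. s ` B m) (\<lambda>m. ren (B m) s (the (y (B m))))"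
    using ren_cmp[OF q caM] inj_on_subset[OF inj w] UB by simp
  also have "\<dots> = cmp M q (\<lambda>m. s ` B m) (\<lambda>m. the (transport s y (s ` B m)))"
    by (rule sym, rule cmp_cong[OF q caS]) (simp_all add: transport_at[OF inj y Bd])
  finally show ?thesis unfolding composite_def using fM SB q by blast
qed

lemma transport_mono:
  assumes s: "bij_betw s L L'" and fL: "finite L" and le: "le_Pi P cmp L y z"
  shows "le_Pi P cmp L' (transport s y) (transport s z)"
proof -
  have inj: "inj_on s L" using s by (rule bij_betw_imp_inj_on)
  have fL': "finite L'" using bij_betw_finite[OF s] fL by blast
  have y: "y \<in> PiP P L" and z: "z \<in> PiP P L" using le_PiD[OF le fL] by auto
  show ?thesis unfolding le_Pi_iff[OF fL']
  proof (intro conjI ballI transport_PiP[OF s _ fL] y z)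
    fix w' assume "w' \<in> dom (transport s z)"
    then obtain w where w: "w \<in> dom z" and w': "w' = s ` w" using transport_dom[OF inj z] by blast
    have wL: "w \<subseteq> L" by (rule partition_on_block_subset[OF PiP_partition[OF z] w])
    have H: "\<Union>(blocks_in y w) = w" "composite y w (the (z w))" using le_PiD(3)[OF le fL w] by auto
    show "\<Union>(blocks_in (transport s y) w') = w'"
      using blocks_in_transport[OF inj y wL] H(1) w' by (simp add: image_Union[symmetric])
    show "composite (transport s y) w' (the (transport s z w'))"
      using composite_transport[OF s fL y wL H] transport_at[OF inj z w] w' by simp
  qed
qed

lemma transport_comp:
  assumes s: "bij_betw s L L'" and t: "bij_betw t L' L''" and y: "y \<in> PiP P L" and fL: "finite L"
  shows "transport t (transport s y) = transport (t \<circ> s) y"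
proof -
  have inj: "inj_on s L" "inj_on t L'" "inj_on (t \<circ> s) L"
    using s t bij_betw_trans[OF s t] by (auto dest: bij_betw_imp_inj_on)
  have sub: "u \<subseteq> L" if "u \<in> dom y" for u using partition_on_block_subset[OF PiP_partition[OF y] that] .
  have ty: "transport s y \<in> PiP P L'" by (rule transport_PiP[OF s y fL])
  show ?thesis
  proof (rule map_eqI)
    show "dom (transport t (transport s y)) = dom (transport (t \<circ> s) y)"
      unfolding transport_dom[OF inj(2) ty] transport_dom[OF inj(1) y] transport_dom[OF inj(3) y]
      by (auto simp: image_comp)
    fix w assume "w \<in> dom (transport (t \<circ> s) y)"
    then obtain u where u: "u \<in> dom y" and w: "w = (t \<circ> s) ` u" using transport_dom[OF inj(3) y] by blast
    have su: "s ` u \<in> dom (transport s y)" using transport_dom[OF inj(1) y] u by blast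
    have "ren (s ` u) t (ren u s (the (y u))) = ren u (t \<circ> s) (the (y u))"
      using ren_comp[OF finite_subset[OF sub[OF u] fL] bij_betw_subset[OF s sub[OF u] refl]
          bij_betw_subset[OF t _ refl] PiP_value[OF y u]] bij_betw_imp_surj_on[OF s] sub[OF u] by blast
    then show "the (transport t (transport s y) w) = the (transport (t \<circ> s) y w)"
      using transport_at[OF inj(2) ty su] transport_at[OF inj(1) y u] transport_at[OF inj(3) y u] w
      by (simp add: image_comp)
  qed
qed

lemma transport_id:
  assumes y: "y \<in> PiP P L" and fL: "finite L" and s: "\<And>i. i \<in> L \<Longrightarrow> s i = i"
  shows "transport s y = y"
proof -
  have inj: "inj_on s L" using s by (simp add: inj_on_def)
  have sub: "u \<subseteq> L" if "u \<in> dom y" for u using partition_on_block_subset[OF PiP_partition[OF y] that] .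
  have su: "s ` u = u" if "u \<in> dom y" for u using s sub[OF that] by (auto simp: image_iff subset_iff)
  show ?thesis
  proof (rule map_eqI)
    show "dom (transport s y) = dom y" using transport_dom[OF inj y] su by simp
    fix u assume u: "u \<in> dom y"
    have "ren u s (the (y u)) = the (y u)"
      by (rule ren_id[OF finite_subset[OF sub[OF u] fL] _ PiP_value[OF y u]]) (use s sub[OF u] in blast)
    then show "the (transport s y u) = the (y u)" using transport_at[OF inj y u] su[OF u] by simp
  qed
qed

lemma transport_one_block:
  assumes s: "bij_betw s L L'" and p: "p \<in> P L"
  shows "transport s (one_block L p) = one_block L' (ren L s p)"
proof -
  have inj: "inj_on s L" using s by (rule bij_betw_imp_inj_on)
  have "L \<in> dom (one_block L p)" unfolding one_block_def by simp
  then show ?thesis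
    using transport_at[OF inj one_block_PiP[OF p]] transport_dom[OF inj one_block_PiP[OF p]]
      bij_betw_imp_surj_on[OF s] unfolding one_block_def
    by (intro map_eqI) auto
qed

lemma zero_interval_transport_iso:
  assumes s: "bij_betw s L L'" and fL: "finite L" and p: "p \<in> P L"
  shows "poset_iso (zero_interval L p) (le_Pi P cmp L) (zero_interval L' (ren L s p)) (le_Pi P cmp L')"
proof -
  define t where "t = inv_into L s"
  have t: "bij_betw t L' L" unfolding t_def by (rule bij_betw_inv_into[OF s])
  have fL': "finite L'" using bij_betw_finite[OF s] fL by blast
  have ts: "transport t (transport s y) = y" if "y \<in> PiP P L" for y
    using transport_comp[OF s t that fL] transport_id[OF that fL] bij_betw_inv_into_left[OF s]
    unfolding t_def by simp
  have st: "transport s (transport t z) = z" if "z \<in> PiP P L'" for z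
    using transport_comp[OF t s that fL'] transport_id[OF that fL'] bij_betw_inv_into_right[OF s]
    unfolding t_def by simp
  have tp: "ren L' t (ren L s p) = p"
    using ren_comp[OF fL s t p] ren_id[OF fL _ p] bij_betw_inv_into_left[OF s] unfolding t_def by simp
  have Z: "zero_interval L p = {y \<in> PiP P L. le_Pi P cmp L y (one_block L p)}"
    and Z': "zero_interval L' (ren L s p) = {z \<in> PiP P L'. le_Pi P cmp L' z (one_block L' (ren L s p))}"
    using zero_interval_eq fL fL' by blast+
  have ord: "le_Pi P cmp L y y' \<longleftrightarrow> le_Pi P cmp L' (transport s y) (transport s y')"
    if "y \<in> PiP P L" "y' \<in> PiP P L" for y y'
    using transport_mono[OF s fL, of y y'] transport_mono[OF t fL', of "transport s y" "transport s y'"]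
      ts that by auto
  have "transport s ` zero_interval L p = zero_interval L' (ren L s p)"
  proof (intro equalityI subsetI)
    fix z assume "z \<in> transport s ` zero_interval L p"
    then show "z \<in> zero_interval L' (ren L s p)"
      unfolding Z Z' using transport_PiP[OF s _ fL] transport_mono[OF s fL] transport_one_block[OF s p]
      by force
  next
    fix z assume "z \<in> zero_interval L' (ren L s p)"
    then have z: "z \<in> PiP P L'" and le: "le_Pi P cmp L' z (one_block L' (ren L s p))" unfolding Z' by auto
    have "le_Pi P cmp L (transport t z) (one_block L p)"
      using transport_mono[OF t fL' le] transport_one_block[OF t ren_in[OF fL s p]] tp by simp
    then have "transport t z \<in> zero_interval L p" unfolding Z using transport_PiP[OF t z fL'] by simp
    then show "z \<in> transport s ` zero_interval L p" using st[OF z] by force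
  qed
  then show ?thesis
    using ord unfolding Z by (intro poset_iso_of_embedding is_poset_le_Pi fL) auto
qed

end

section \<open>Lower intervals\<close>

definition restr :: "(nat set \<Rightarrow> 'b option) \<Rightarrow> nat set \<Rightarrow> (nat set \<Rightarrow> 'b option)" where
  "restr y v = (\<lambda>u. if u \<subseteq> v then y u else None)"

definition glue :: "nat set set \<Rightarrow> (nat set \<Rightarrow> nat set \<Rightarrow> 'b option) \<Rightarrow> (nat set \<Rightarrow> 'b option)" where
  "glue V T = (\<lambda>u. if \<exists>v\<in>V. u \<in> dom (T v) then T (THE v. v \<in> V \<and> u \<in> dom (T v)) u else None)"

lemma restr_dom: "dom (restr y v) = blocks_in y v"
  unfolding restr_def blocks_in_def by (auto simp: domIff split: if_splits)

lemma blocks_in_restr: "w \<subseteq> v \<Longrightarrow> blocks_in (restr y v) w = blocks_in y w"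
  using restr_dom[of y v] unfolding blocks_in_def by auto

context aug_basic_operad
begin

lemma composite_cong:
  assumes x: "x \<in> PiP P I" and fI: "finite I" and blocks: "blocks_in x' w = blocks_in x w"
    and agree: "\<And>u. u \<in> blocks_in x w \<Longrightarrow> x' u = x u"
  shows "composite x' w p \<longleftrightarrow> composite x w p"
proof -
  have "cmp L q b (\<lambda>l. the (x' (b l))) = cmp L q b (\<lambda>l. the (x (b l)))"
    if fL: "finite L" and b: "bij_betw b L (blocks_in x w)" and q: "q \<in> P L" for L b q
  proof -
    have ca: "comp_args P L b (\<lambda>l. the (x (b l)))"
      using comp_args_blocks[OF x fI b _ fL] unfolding blocks_in_def by blast
    show ?thesis by (rule sym, rule cmp_cong[OF q ca]) (use agree bij_betw_apply[OF b] in auto)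
  qed
  then show ?thesis unfolding composite_def blocks by metis
qed

lemma composite_restr_iff:
  assumes y: "y \<in> PiP P I" and fI: "finite I" and wv: "w \<subseteq> v"
  shows "composite (restr y v) w p \<longleftrightarrow> composite y w p"
  by (rule composite_cong[OF y fI blocks_in_restr[OF wv]])
    (use wv in \<open>auto simp: restr_def blocks_in_def\<close>)

lemma restr_PiP:
  assumes y: "y \<in> PiP P I" and cover: "\<Union>(blocks_in y v) = v"
  shows "restr y v \<in> PiP P v"
proof -
  have "partition_on v (dom (restr y v))" using partition_on_blocks_in[OF y cover] by (simp add: restr_dom)
  moreover have "the (restr y v u) \<in> P u" if "u \<in> dom (restr y v)" for u
  proof -
    have "u \<in> dom y" "u \<subseteq> v" using that by (auto simp: restr_dom blocks_in_def)
    then show ?thesis using PiP_value[OF y] by (simp add: restr_def)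
  qed
  ultimately show ?thesis unfolding PiP_def by blast
qed

lemma le_one_block_iff:
  assumes fv: "finite v" and p: "p \<in> P v"
  shows "le_Pi P cmp v z (one_block v p) \<longleftrightarrow> z \<in> PiP P v \<and> \<Union>(blocks_in z v) = v \<and> composite z v p"
  unfolding le_Pi_iff[OF fv] using one_block_PiP[OF p] by (simp add: one_block_def)

lemma le_iff_restr_le_one_block:
  assumes y: "y \<in> PiP P I" and th: "th \<in> PiP P I" and fI: "finite I"
  shows "le_Pi P cmp I y th \<longleftrightarrow> (\<forall>v\<in>dom th. le_Pi P cmp v (restr y v) (one_block v (the (th v))))"
proof -
  have "\<Union>(blocks_in y v) = v \<and> composite y v (the (th v))
      \<longleftrightarrow> le_Pi P cmp v (restr y v) (one_block v (the (th v)))" if v: "v \<in> dom th" for v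
  proof -
    have vI: "v \<subseteq> I" by (rule partition_on_block_subset[OF PiP_partition[OF th] v])
    have "blocks_in (restr y v) v = blocks_in y v" by (rule blocks_in_restr) simp
    then show ?thesis
      unfolding le_one_block_iff[OF finite_subset[OF vI fI] PiP_value[OF th v]]
        composite_restr_iff[OF y fI order_refl]
      using restr_PiP[OF y, of v] by auto
  qed
  then show ?thesis unfolding le_Pi_iff[OF fI] using y th by (simp cong: ball_cong)
qed

lemma le_iff_restr_le:
  assumes l1: "le_Pi P cmp I y th" and l2: "le_Pi P cmp I y' th" and fI: "finite I"
  shows "le_Pi P cmp I y y' \<longleftrightarrow> (\<forall>v\<in>dom th. le_Pi P cmp v (restr y v) (restr y' v))"
proof -
  have y: "y \<in> PiP P I" and th: "th \<in> PiP P I" and y': "y' \<in> PiP P I"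
    using le_PiD[OF l1 fI] le_PiD[OF l2 fI] by auto
  have vI: "v \<subseteq> I" if "v \<in> dom th" for v by (rule partition_on_block_subset[OF PiP_partition[OF th] that])
  have fv: "finite v" if "v \<in> dom th" for v using finite_subset[OF vI[OF that] fI] .
  have rP: "restr z v \<in> PiP P v" if "le_Pi P cmp I z th" "v \<in> dom th" for z v
    using restr_PiP le_PiD[OF that(1) fI] that(2) by blast
  have block: "\<Union>(blocks_in y w) = w \<and> composite y w (the (y' w))
      \<longleftrightarrow> \<Union>(blocks_in (restr y v) w) = w \<and> composite (restr y v) w (the (restr y' v w))"
    if wv: "w \<subseteq> v" for w v
  proof -
    have "the (restr y' v w) = the (y' w)" using wv by (simp add: restr_def)
    then show ?thesis using blocks_in_restr[OF wv, of y] composite_restr_iff[OF y fI wv] by simp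
  qed
  show ?thesis
  proof
    assume le: "le_Pi P cmp I y y'"
    show "\<forall>v\<in>dom th. le_Pi P cmp v (restr y v) (restr y' v)"
    proof
      fix v assume v: "v \<in> dom th"
      have "\<Union>(blocks_in (restr y v) w) = w \<and> composite (restr y v) w (the (restr y' v w))"
        if "w \<in> dom (restr y' v)" for w
      proof -
        have w: "w \<in> dom y'" "w \<subseteq> v" using that by (auto simp: restr_dom blocks_in_def)
        then show ?thesis using le_PiD(3)[OF le fI w(1)] block[OF w(2)] by blast
      qed
      then show "le_Pi P cmp v (restr y v) (restr y' v)"
        unfolding le_Pi_iff[OF fv[OF v]] using rP[OF l1 v] rP[OF l2 v] by blast
    qed
  next
    assume le: "\<forall>v\<in>dom th. le_Pi P cmp v (restr y v) (restr y' v)"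
    have "\<Union>(blocks_in y w) = w \<and> composite y w (the (y' w))" if w: "w \<in> dom y'" for w
    proof -
      obtain v where v: "v \<in> dom th" "w \<subseteq> v" using le_Pi_block_refines[OF l2 fI w] by blast
      have "w \<in> dom (restr y' v)" using w v(2) by (simp add: restr_dom blocks_in_def)
      then show ?thesis using le_PiD(3)[OF le[rule_format, OF v(1)] fv[OF v(1)]] block[OF v(2)] by blast
    qed
    then show "le_Pi P cmp I y y'" unfolding le_Pi_iff[OF fI] using y y' by blast
  qed
qed

lemma glue_at:
  assumes V: "partition_on I V" and T: "\<And>v. v \<in> V \<Longrightarrow> T v \<in> PiP P v"
    and v: "v \<in> V" and u: "u \<in> dom (T v)"
  shows "glue V T u = T v u"
proof -
  have uniq: "v' = v" if v': "v' \<in> V" "u \<in> dom (T v')" for v'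
  proof -
    have "u \<subseteq> v'" "u \<subseteq> v"
      using partition_on_block_subset[OF PiP_partition[OF T[OF v'(1)]] v'(2)]
        partition_on_block_subset[OF PiP_partition[OF T[OF v]] u] by simp_all
    moreover obtain i where "i \<in> u"
      using partition_on_block_nonempty[OF PiP_partition[OF T[OF v]] u] by blast
    ultimately show ?thesis using partition_on_eq_block[OF V v'(1) v] by blast
  qed
  have "(THE v'. v' \<in> V \<and> u \<in> dom (T v')) = v"
  proof (rule the_equality)
    show "v \<in> V \<and> u \<in> dom (T v)" using v u ..
  qed (use uniq in blast)
  moreover have "\<exists>v\<in>V. u \<in> dom (T v)" using v u by blast
  ultimately show ?thesis unfolding glue_def by simp
qed

lemma glue_dom:
  assumes V: "partition_on I V" and T: "\<And>v. v \<in> V \<Longrightarrow> T v \<in> PiP P v"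
  shows "dom (glue V T) = (\<Union>v\<in>V. dom (T v))"
proof
  show "dom (glue V T) \<subseteq> (\<Union>v\<in>V. dom (T v))"
  proof
    fix u assume "u \<in> dom (glue V T)"
    then have "\<exists>v\<in>V. u \<in> dom (T v)" unfolding glue_def by (auto split: if_splits)
    then show "u \<in> (\<Union>v\<in>V. dom (T v))" by blast
  qed
  show "(\<Union>v\<in>V. dom (T v)) \<subseteq> dom (glue V T)"
  proof
    fix u assume "u \<in> (\<Union>v\<in>V. dom (T v))"
    then obtain v where "v \<in> V" "u \<in> dom (T v)" by blast
    then show "u \<in> dom (glue V T)" using glue_at[OF V T] by (metis domIff)
  qed
qed

lemma restr_glue:
  assumes V: "partition_on I V" and T: "\<And>v. v \<in> V \<Longrightarrow> T v \<in> PiP P v" and v: "v \<in> V"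
  shows "restr (glue V T) v = T v"
proof (rule map_eqI)
  have "u \<in> dom (T v)" if "v' \<in> V" "u \<in> dom (T v')" "u \<subseteq> v" for u v'
  proof -
    have "u \<subseteq> v'" "u \<noteq> {}"
      using partition_on_block_subset[OF PiP_partition[OF T]] partition_on_block_nonempty[OF PiP_partition[OF T]]
        that by blast+
    then have "v' = v" using partition_on_eq_block[OF V that(1) v] that(3) by blast
    then show ?thesis using that(2) by simp
  qed
  moreover have "u \<subseteq> v" if "u \<in> dom (T v)" for u
    by (rule partition_on_block_subset[OF PiP_partition[OF T[OF v]] that])
  ultimately show "dom (restr (glue V T) v) = dom (T v)"
    using v by (auto simp: restr_dom blocks_in_def glue_dom[OF V T])
  show "the (restr (glue V T) v u) = the (T v u)" if "u \<in> dom (T v)" for u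
    using glue_at[OF V T v that] partition_on_block_subset[OF PiP_partition[OF T[OF v]] that]
    by (simp add: restr_def)
qed

lemma glue_PiP:
  assumes V: "partition_on I V" and T: "\<And>v. v \<in> V \<Longrightarrow> T v \<in> PiP P v"
  shows "glue V T \<in> PiP P I"
proof -
  have "partition_on I (\<Union>v\<in>V. dom (T v))"
  proof (rule partition_onI_overlap)
    have "\<Union>(dom (T v)) = v" if "v \<in> V" for v
      using partition_onD1[OF PiP_partition[OF T[OF that]]] by simp
    then have "\<Union>(\<Union>v\<in>V. dom (T v)) = \<Union>V" by blast
    then show "\<Union>(\<Union>v\<in>V. dom (T v)) = I" using partition_onD1[OF V] by simp
  next
    fix u u' assume "u \<in> (\<Union>v\<in>V. dom (T v))" "u' \<in> (\<Union>v\<in>V. dom (T v))" and ov: "u \<inter> u' \<noteq> {}"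
    then obtain v v' where v: "v \<in> V" "u \<in> dom (T v)" and v': "v' \<in> V" "u' \<in> dom (T v')" by blast
    have "u \<subseteq> v" "u' \<subseteq> v'"
      using partition_on_block_subset[OF PiP_partition[OF T]] v v' by blast+
    then have "v = v'" using partition_on_eq_block[OF V v(1) v'(1)] ov by blast
    then show "u = u'" using partition_on_eq_block[OF PiP_partition[OF T[OF v(1)]] v(2)] v' ov by blast
  next
    show "{} \<notin> (\<Union>v\<in>V. dom (T v))"
      using partition_on_block_nonempty[OF PiP_partition[OF T]] by blast
  qed
  moreover have "the (glue V T u) \<in> P u" if u: "u \<in> (\<Union>v\<in>V. dom (T v))" for u
  proof -
    obtain v where v: "v \<in> V" "u \<in> dom (T v)" using u by blast
    then show ?thesis using glue_at[OF V T v] PiP_value[OF T[OF v(1)] v(2)] by simp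
  qed
  ultimately show ?thesis unfolding PiP_def using glue_dom[OF V T] by simp
qed

lemma map_restr_image:
  assumes th: "th \<in> PiP P I" and fI: "finite I" and vs: "distinct vs" "set vs = dom th"
  shows "(\<lambda>y. map (restr y) vs) ` {y \<in> PiP P I. le_Pi P cmp I y th}
    = prod_carrier (\<lambda>k. zero_interval (vs ! k) (the (th (vs ! k)))) [0..<length vs]"
proof -
  define n where "n = length vs"
  have V: "partition_on I (dom th)" by (rule PiP_partition[OF th])
  have vk: "vs ! k \<in> dom th" if "k < n" for k using that vs unfolding n_def by (metis nth_mem)
  have fv: "finite v" if "v \<in> dom th" for v by (rule partition_on_finite_block[OF V fI that])
  have carrier: "ts \<in> prod_carrier (\<lambda>k. zero_interval (vs ! k) (the (th (vs ! k)))) [0..<n]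
      \<longleftrightarrow> length ts = n \<and> (\<forall>k<n. ts ! k \<in> PiP P (vs ! k)
          \<and> le_Pi P cmp (vs ! k) (ts ! k) (one_block (vs ! k) (the (th (vs ! k)))))" for ts
    unfolding prod_carrier_def using zero_interval_eq[OF fv[OF vk]] by auto
  show ?thesis unfolding n_def[symmetric]
  proof (intro equalityI subsetI)
    fix ts assume "ts \<in> (\<lambda>y. map (restr y) vs) ` {y \<in> PiP P I. le_Pi P cmp I y th}"
    then obtain y where y: "y \<in> PiP P I" "le_Pi P cmp I y th" and ts: "ts = map (restr y) vs" by blast
    have le: "le_Pi P cmp v (restr y v) (one_block v (the (th v)))" if "v \<in> dom th" for v
      using le_iff_restr_le_one_block[OF y(1) th fI] y(2) that by blast
    have "restr y (vs ! k) \<in> PiP P (vs ! k)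
        \<and> le_Pi P cmp (vs ! k) (restr y (vs ! k)) (one_block (vs ! k) (the (th (vs ! k))))" if "k < n" for k
      using le[OF vk[OF that]] le_PiD(1)[OF le[OF vk[OF that]] fv[OF vk[OF that]]] by simp
    then show "ts \<in> prod_carrier (\<lambda>k. zero_interval (vs ! k) (the (th (vs ! k)))) [0..<n]"
      unfolding carrier ts by (simp add: n_def)
  next
    fix ts assume "ts \<in> prod_carrier (\<lambda>k. zero_interval (vs ! k) (the (th (vs ! k)))) [0..<n]"
    then have len: "length ts = n"
      and tsk: "\<And>k. k < n \<Longrightarrow> ts ! k \<in> PiP P (vs ! k)
        \<and> le_Pi P cmp (vs ! k) (ts ! k) (one_block (vs ! k) (the (th (vs ! k))))"
      unfolding carrier by auto
    define T where "T v = the (map_of (zip vs ts) v)" for v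
    have Tk: "T (vs ! k) = ts ! k" if "k < n" for k
      unfolding T_def using map_of_zip_nth[of vs ts k] len vs(1) that unfolding n_def by simp
    have T: "T v \<in> PiP P v" and Tle: "le_Pi P cmp v (T v) (one_block v (the (th v)))"
      if "v \<in> dom th" for v
      using that tsk Tk vs(2) unfolding n_def by (metis in_set_conv_nth)+
    have yP: "glue (dom th) T \<in> PiP P I" by (rule glue_PiP[OF V T])
    have "le_Pi P cmp I (glue (dom th) T) th"
      unfolding le_iff_restr_le_one_block[OF yP th fI] using restr_glue[OF V T] Tle by simp
    moreover have "map (restr (glue (dom th) T)) vs = ts"
      using restr_glue[OF V T] vk Tk len unfolding n_def by (intro nth_equalityI) auto
    ultimately show "ts \<in> (\<lambda>y. map (restr y) vs) ` {y \<in> PiP P I. le_Pi P cmp I y th}"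
      using yP by (metis (mono_tags, lifting) image_eqI mem_Collect_eq)
  qed
qed

lemma lower_interval_iso:
  assumes th: "th \<in> PiP P I" and fI: "finite I" and vs: "distinct vs" "set vs = dom th"
  shows "poset_iso {y \<in> PiP P I. le_Pi P cmp I (pi_zero e I) y \<and> le_Pi P cmp I y th} (le_Pi P cmp I)
     (prod_carrier (\<lambda>k. zero_interval (vs ! k) (the (th (vs ! k)))) [0..<length vs])
     (prod_le (\<lambda>k. le_Pi P cmp (vs ! k)) [0..<length vs])"
proof -
  define Y where "Y = {y \<in> PiP P I. le_Pi P cmp I y th}"
  have lower: "{y \<in> PiP P I. le_Pi P cmp I (pi_zero e I) y \<and> le_Pi P cmp I y th} = Y"
    unfolding Y_def using pi_zero_le[OF _ fI] by blast
  have ord: "le_Pi P cmp I y y'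
      \<longleftrightarrow> prod_le (\<lambda>k. le_Pi P cmp (vs ! k)) [0..<length vs] (map (restr y) vs) (map (restr y') vs)"
    if "y \<in> Y" "y' \<in> Y" for y y'
  proof -
    have "le_Pi P cmp I y th" "le_Pi P cmp I y' th" using that unfolding Y_def by auto
    then have "le_Pi P cmp I y y' \<longleftrightarrow> (\<forall>v\<in>dom th. le_Pi P cmp v (restr y v) (restr y' v))"
      by (rule le_iff_restr_le[OF _ _ fI])
    also have "\<dots> \<longleftrightarrow> (\<forall>k<length vs. le_Pi P cmp (vs ! k) (restr y (vs ! k)) (restr y' (vs ! k)))"
      using vs(2) by (metis in_set_conv_nth)
    finally show ?thesis unfolding prod_le_def by simp
  qed
  have "is_poset Y (le_Pi P cmp I)" by (rule is_poset_le_Pi[OF fI]) (auto simp: Y_def)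
  then show ?thesis unfolding lower
    by (rule poset_iso_of_embedding[where ly = "prod_le (\<lambda>k. le_Pi P cmp (vs ! k)) [0..<length vs]",
          OF _ ord map_restr_image[OF th fI vs, folded Y_def]])
qed

end

section \<open>The collection of intervals indexed by coinvariants\<close>

locale coinvariant_representatives = aug_basic_operad P ren e cmp
  for P :: "nat set \<Rightarrow> 'b set"
    and ren :: "nat set \<Rightarrow> (nat \<Rightarrow> nat) \<Rightarrow> 'b \<Rightarrow> 'b"
    and e :: "nat \<Rightarrow> 'b"
    and cmp :: "nat set \<Rightarrow> 'b \<Rightarrow> (nat \<Rightarrow> nat set) \<Rightarrow> (nat \<Rightarrow> 'b) \<Rightarrow> 'b" +
  fixes r :: "nat \<times> 'b set \<Rightarrow> 'b"
  assumes representative: "\<forall>(n, \<alpha>) \<in> coinvariants P ren. r (n, \<alpha>) \<in> \<alpha>"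
begin

definition coinv_interval :: "nat \<times> 'b set \<Rightarrow> (nat set \<Rightarrow> 'b option) set" where
  "coinv_interval = (\<lambda>(n, \<alpha>). zero_interval {1..n} (r (n, \<alpha>)))"

definition coinv_le :: "nat \<times> 'b set \<Rightarrow> (nat set \<Rightarrow> 'b option) \<Rightarrow> (nat set \<Rightarrow> 'b option) \<Rightarrow> bool" where
  "coinv_le = (\<lambda>(n, \<alpha>). le_Pi P cmp {1..n})"

lemma representative_in:
  assumes "(n, \<alpha>) \<in> coinvariants P ren"
  shows "r (n, \<alpha>) \<in> P {1..n}"
proof -
  obtain x where "x \<in> P {1..n}" and "\<alpha> = {ren {1..n} s x | s. bij_betw s {1..n} {1..n}}"
    using assms unfolding coinvariants_def by blast
  then show ?thesis using representative assms ren_in by auto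
qed

text \<open>Relabelling \<open>L\<close> by \<open>{1..card L}\<close> turns \<open>p\<close> into an element of some orbit \<open>\<alpha>\<close>, and a
  further permutation turns it into \<open>r \<alpha>\<close>.\<close>

lemma zero_interval_iso_coinv_interval:
  assumes fL: "finite L" and p: "p \<in> P L"
  shows "\<exists>\<beta>\<in>coinvariants P ren.
    poset_iso (zero_interval L p) (le_Pi P cmp L) (coinv_interval \<beta>) (coinv_le \<beta>)"
proof -
  define n where "n = card L"
  have n: "n \<ge> 1" unfolding n_def using fL P_nonempty_index[OF p] by (simp add: Suc_le_eq card_gt_0_iff)
  obtain h where "bij_betw h {1..n} L" unfolding n_def using ex_bij_betw_nat_finite_1[OF fL] by blast
  then have s: "bij_betw (inv_into {1..n} h) L {1..n}" by (rule bij_betw_inv_into)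
  define x where "x = ren L (inv_into {1..n} h) p"
  have x: "x \<in> P {1..n}" unfolding x_def by (rule ren_in[OF fL s p])
  define \<alpha> where "\<alpha> = {ren {1..n} t x | t. bij_betw t {1..n} {1..n}}"
  have \<beta>: "(n, \<alpha>) \<in> coinvariants P ren" unfolding coinvariants_def \<alpha>_def using n x by blast
  then have "r (n, \<alpha>) \<in> \<alpha>" using representative by blast
  then obtain t where t: "bij_betw t {1..n} {1..n}" and rt: "r (n, \<alpha>) = ren {1..n} t x"
    unfolding \<alpha>_def by blast
  have "ren L (t \<circ> inv_into {1..n} h) p = r (n, \<alpha>)"
    using ren_comp[OF fL s t p] rt unfolding x_def by simp
  then have "poset_iso (zero_interval L p) (le_Pi P cmp L) (zero_interval {1..n} (r (n, \<alpha>))) (le_Pi P cmp {1..n})"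
    using zero_interval_transport_iso[OF bij_betw_trans[OF s t] fL p] by simp
  then show ?thesis unfolding coinv_interval_def coinv_le_def using \<beta> by force
qed

lemma lower_interval_iso_finite_product:
  assumes x: "x \<in> PiP P I" and fI: "finite I"
  shows "iso_finite_product (coinvariants P ren) coinv_interval coinv_le
    {y \<in> PiP P I. le_Pi P cmp I (pi_zero e I) y \<and> le_Pi P cmp I y x} (le_Pi P cmp I)"
proof -
  obtain vs where vs: "distinct vs" "set vs = dom x"
    using finite_distinct_list[OF finite_elements[OF fI PiP_partition[OF x]]] by metis
  define m where "m = length vs"
  have block: "vs ! k \<in> dom x" if "k < m" for k using that vs(2) unfolding m_def by (metis nth_mem)
  have "\<exists>\<beta>. k < m \<longrightarrow> \<beta> \<in> coinvariants P ren \<and> poset_iso (zero_interval (vs ! k) (the (x (vs ! k))))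
      (le_Pi P cmp (vs ! k)) (coinv_interval \<beta>) (coinv_le \<beta>)" for k
    using zero_interval_iso_coinv_interval
      partition_on_finite_block[OF PiP_partition[OF x] fI block] PiP_value[OF x block] by blast
  then obtain \<beta> where \<beta>: "\<And>k. k < m \<Longrightarrow> \<beta> k \<in> coinvariants P ren"
    and iso: "\<And>k. k < m \<Longrightarrow> poset_iso (zero_interval (vs ! k) (the (x (vs ! k))))
      (le_Pi P cmp (vs ! k)) (coinv_interval (\<beta> k)) (coinv_le (\<beta> k))"
    by metis
  have "poset_iso (prod_carrier (\<lambda>k. zero_interval (vs ! k) (the (x (vs ! k)))) [0..<m])
      (prod_le (\<lambda>k. le_Pi P cmp (vs ! k)) [0..<m])
      (prod_carrier coinv_interval (map \<beta> [0..<m])) (prod_le coinv_le (map \<beta> [0..<m]))"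
    by (rule poset_iso_prod) (simp_all add: iso)
  then have iso: "poset_iso {y \<in> PiP P I. le_Pi P cmp I (pi_zero e I) y \<and> le_Pi P cmp I y x}
      (le_Pi P cmp I) (prod_carrier coinv_interval (map \<beta> [0..<m])) (prod_le coinv_le (map \<beta> [0..<m]))"
    by (rule poset_iso_trans[OF lower_interval_iso[OF x fI vs, folded m_def]])
  have set: "set (map \<beta> [0..<m]) \<subseteq> coinvariants P ren" using \<beta> by auto
  show ?thesis
    unfolding iso_finite_product_def by (rule exI[of _ "map \<beta> [0..<m]"]) (intro conjI set iso)
qed

lemma upper_interval_iso_finite_product:
  assumes x: "x \<in> PiP P I" and fI: "finite I" and p: "p \<in> P I"
    and le: "le_Pi P cmp I x (one_block I p)"
  shows "iso_finite_product (coinvariants P ren) coinv_interval coinv_le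
    {y \<in> PiP P I. le_Pi P cmp I x y \<and> le_Pi P cmp I y (one_block I p)} (le_Pi P cmp I)"
proof -
  obtain k q where q: "q \<in> P {1..k}" and iso1: "poset_iso
      {y \<in> PiP P I. le_Pi P cmp I x y \<and> le_Pi P cmp I y (one_block I p)} (le_Pi P cmp I)
      (zero_interval {1..k} q) (le_Pi P cmp {1..k})"
    by (rule upper_interval_iso[OF x fI p le])
  obtain \<beta> where "\<beta> \<in> coinvariants P ren"
    and "poset_iso (zero_interval {1..k} q) (le_Pi P cmp {1..k}) (coinv_interval \<beta>) (coinv_le \<beta>)"
    using zero_interval_iso_coinv_interval[OF finite_atLeastAtMost q] by blast
  then show ?thesis
    unfolding iso_finite_product_def
    by (intro exI[of _ "[\<beta>]"] conjI poset_iso_trans[OF poset_iso_trans[OF iso1] poset_iso_singleton_prod])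
      auto
qed

lemma good_collection_coinv_intervals:
  "good_collection (coinvariants P ren) coinv_interval coinv_le"
  unfolding good_collection_def
proof (intro conjI ballI)
  fix \<beta> assume \<beta>: "\<beta> \<in> coinvariants P ren"
  then obtain n \<alpha> where \<beta>_eq: "\<beta> = (n, \<alpha>)" by (cases \<beta>)
  define I where "I = {1..n}"
  have fI: "finite I" unfolding I_def by simp
  have p: "r \<beta> \<in> P I" using representative_in \<beta> unfolding \<beta>_eq I_def by blast
  have C: "coinv_interval \<beta> = {y \<in> PiP P I. le_Pi P cmp I y (one_block I (r \<beta>))}"
    and le: "coinv_le \<beta> = le_Pi P cmp I"
    unfolding coinv_interval_def coinv_le_def \<beta>_eq I_def using zero_interval_eq by auto
  show "is_poset (coinv_interval \<beta>) (coinv_le \<beta>)" unfolding C le by (rule is_poset_le_Pi[OF fI]) blast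
  have top: "one_block I (r \<beta>) \<in> coinv_interval \<beta>"
    unfolding C using one_block_PiP[OF p] le_Pi_refl[OF _ fI] by blast
  have bot: "pi_zero e I \<in> coinv_interval \<beta>"
    unfolding C using pi_zero_PiP[OF fI] pi_zero_le[OF one_block_PiP[OF p] fI] by blast
  have lower: "{y \<in> coinv_interval \<beta>. le_Pi P cmp I (pi_zero e I) y \<and> le_Pi P cmp I y x}
      = {y \<in> PiP P I. le_Pi P cmp I (pi_zero e I) y \<and> le_Pi P cmp I y x}"
    and upper: "{y \<in> coinv_interval \<beta>. le_Pi P cmp I x y \<and> le_Pi P cmp I y (one_block I (r \<beta>))}
      = {y \<in> PiP P I. le_Pi P cmp I x y \<and> le_Pi P cmp I y (one_block I (r \<beta>))}"
    if "x \<in> coinv_interval \<beta>" for x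
    using that le_Pi_trans[OF _ _ fI] le_PiD(1)[OF _ fI] unfolding C by blast+
  have bounds: "\<forall>y\<in>coinv_interval \<beta>. coinv_le \<beta> (pi_zero e I) y \<and> coinv_le \<beta> y (one_block I (r \<beta>))"
    unfolding C le using pi_zero_le[OF _ fI] by blast
  have intervals: "\<forall>x\<in>coinv_interval \<beta>.
      iso_finite_product (coinvariants P ren) coinv_interval coinv_le
        {y \<in> coinv_interval \<beta>. coinv_le \<beta> (pi_zero e I) y \<and> coinv_le \<beta> y x} (coinv_le \<beta>) \<and>
      iso_finite_product (coinvariants P ren) coinv_interval coinv_le
        {y \<in> coinv_interval \<beta>. coinv_le \<beta> x y \<and> coinv_le \<beta> y (one_block I (r \<beta>))} (coinv_le \<beta>)"
  proof
    fix x assume x: "x \<in> coinv_interval \<beta>"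
    then have xP: "x \<in> PiP P I" and xt: "le_Pi P cmp I x (one_block I (r \<beta>))" unfolding C by auto
    show "iso_finite_product (coinvariants P ren) coinv_interval coinv_le
        {y \<in> coinv_interval \<beta>. coinv_le \<beta> (pi_zero e I) y \<and> coinv_le \<beta> y x} (coinv_le \<beta>) \<and>
      iso_finite_product (coinvariants P ren) coinv_interval coinv_le
        {y \<in> coinv_interval \<beta>. coinv_le \<beta> x y \<and> coinv_le \<beta> y (one_block I (r \<beta>))} (coinv_le \<beta>)"
      unfolding le lower[OF x] upper[OF x]
      using lower_interval_iso_finite_product[OF xP fI] upper_interval_iso_finite_product[OF xP fI p xt] ..
  qed
  show "\<exists>bot\<in>coinv_interval \<beta>. \<exists>top\<in>coinv_interval \<beta>.
      (\<forall>y\<in>coinv_interval \<beta>. coinv_le \<beta> bot y \<and> coinv_le \<beta> y top) \<and>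
      (\<forall>x\<in>coinv_interval \<beta>.
         iso_finite_product (coinvariants P ren) coinv_interval coinv_le
           {y \<in> coinv_interval \<beta>. coinv_le \<beta> bot y \<and> coinv_le \<beta> y x} (coinv_le \<beta>) \<and>
         iso_finite_product (coinvariants P ren) coinv_interval coinv_le
           {y \<in> coinv_interval \<beta>. coinv_le \<beta> x y \<and> coinv_le \<beta> y top} (coinv_le \<beta>))"
    by (intro bexI[OF _ bot] bexI[OF _ top] conjI bounds intervals)
qed

end

theorem proposition3p4:
  fixes P :: "nat set \<Rightarrow> 'b set"
    and ren :: "nat set \<Rightarrow> (nat \<Rightarrow> nat) \<Rightarrow> 'b \<Rightarrow> 'b"
    and e :: "nat \<Rightarrow> 'b"
    and cmp :: "nat set \<Rightarrow> 'b \<Rightarrow> (nat \<Rightarrow> nat set) \<Rightarrow> (nat \<Rightarrow> 'b) \<Rightarrow> 'b"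
    and r :: "nat \<times> 'b set \<Rightarrow> 'b"
  assumes "set_operad P ren e cmp"
    and "augmented P e"
    and "basic P cmp"
    and "\<forall>(n, \<alpha>) \<in> coinvariants P ren. r (n, \<alpha>) \<in> \<alpha>"
  shows "good_collection (coinvariants P ren)
           (\<lambda>(n, \<alpha>). {y \<in> PiP P {1..n}. le_Pi P cmp {1..n} (pi_zero e {1..n}) y
                                    \<and> le_Pi P cmp {1..n} y (one_block {1..n} (r (n, \<alpha>)))})
           (\<lambda>(n, \<alpha>). le_Pi P cmp {1..n})"
proof -
  interpret coinvariant_representatives P ren e cmp r
    using assms by unfold_locales
  show ?thesis
    using good_collection_coinv_intervals
    unfolding coinv_interval_def coinv_le_def zero_interval_def .
qed

end
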